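(* Let $\mathbb{F}$ be any field, $S\subseteq\mathbb{A}$ finite and $\mathcal{O}\subseteq\mathbb{A}^I$ an $S$-ordered orbit. Every nonzero $\operatorname{Aut}(\mathbb{A}/S)$-invariant subspace $V\subseteq\operatorname{Lin}_{\mathbb{F}}\mathcal{O}$ contains $\operatorname{Cog}_{\mathbb{F}}\mathcal{O}$. In particular $\operatorname{Cog}_{\mathbb{F}}\mathcal{O}$ is nonzero and has no $\operatorname{Aut}(\mathbb{A}/S)$-invariant subspaces other than $0$ and itself.
   Context: $\mathbb{A}$ is the Fraïssé limit of the class of all totally ordered (new symbol $<$) members of a free amalgamation class $\mathscr{C}_0=\operatorname{Forb}(\mathscr{F})$ of finite irreflexive $\sigma_0$-structures, $\sigma_0$ finite with unary and binary relations (in each member of $\mathscr{F}$ any two elements $u,v$ are related: $u=v$ or $R(u,v)$ or $R(v,u)$ for some binary $R$; irreflexive: binary relations hold only between distinct elements). $\operatorname{Aut}(\mathbb{A}/S)$ is the group of automorphisms fixing $S$ pointwise. $I$ is a finite totally ordered index set; $a\in\mathbb{A}^I$ is $S$-ordered if $a_i\notin S$ and $a_i<a_j$ for $i<j$; $\mathcal{O}=\operatorname{Aut}(\mathbb{A}/S)\cdot a$ for such $a$. $\operatorname{Lin}_{\mathbb{F}}\mathcal{O}$ is the space of finite formal linear combinations of elements of $\mathcal{O}$. An $\mathcal{O}$-duo $a\parallel b$ is a pair $a,b\in\mathcal{O}$ with $a_i<b_i$ for all $i$, $b_i<a_j$ for $i<j$, and $R(a_i,b_j)\iff R(a_i,a_j)\iff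 R(b_i,b_j)\iff R(b_i,a_j)$ for all binary $R\in\sigma_0$, $i,j\in I$. The cog is $a\between b=\sum_{J\subseteq I}(-1)^{|J|}c^J$ where $c^J_i=b_i$ for $i\in J$ and $c^J_i=a_i$ otherwise; $\operatorname{Cog}_{\mathbb{F}}\mathcal{O}$ is the span of all $\mathcal{O}$-cogs. *)

theory Defs
  imports Main "HOL-Library.Countable_Set"
begin

text \<open>The signature sigma_0 consists of unary relation symbols indexed by a finite
type 'p and binary relation symbols indexed by a finite type 'r.
A finite sigma_0-structure (as used for the members of the forbidden family F and
for the members of the age) is represented on the natural numbers:
a finite carrier, an interpretation of the unary symbols and of the binary symbols.\<close>

type_synonym ('p, 'r) fstruct = "nat set \<times> ('p \<Rightarrow> nat \<Rightarrow> bool) \<times> ('r \<Rightarrow> nat \<Rightarrow> nat \<Rightarrow> bool)"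

definition irreflexive_on :: "'a set \<Rightarrow> ('r \<Rightarrow> 'a \<Rightarrow> 'a \<Rightarrow> bool) \<Rightarrow> bool" where
  "irreflexive_on B R \<longleftrightarrow> (\<forall>r. \<forall>x\<in>B. \<not> R r x x)"

definition emb ::
  "'b set \<Rightarrow> ('p \<Rightarrow> 'b \<Rightarrow> bool) \<Rightarrow> ('r \<Rightarrow> 'b \<Rightarrow> 'b \<Rightarrow> bool) \<Rightarrow>
   'a set \<Rightarrow> ('p \<Rightarrow> 'a \<Rightarrow> bool) \<Rightarrow> ('r \<Rightarrow> 'a \<Rightarrow> 'a \<Rightarrow> bool) \<Rightarrow> ('b \<Rightarrow> 'a) \<Rightarrow> bool" where
  "emb B UB RB C UC RC f \<longleftrightarrow>
     inj_on f B \<and> f ` B \<subseteq> C \<and>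
     (\<forall>p. \<forall>x\<in>B. UB p x \<longleftrightarrow> UC p (f x)) \<and>
     (\<forall>r. \<forall>x\<in>B. \<forall>y\<in>B. RB r x y \<longleftrightarrow> RC r (f x) (f y))"

definition oemb ::
  "'b set \<Rightarrow> ('p \<Rightarrow> 'b \<Rightarrow> bool) \<Rightarrow> ('r \<Rightarrow> 'b \<Rightarrow> 'b \<Rightarrow> bool) \<Rightarrow> ('b \<Rightarrow> 'b \<Rightarrow> bool) \<Rightarrow>
   'a set \<Rightarrow> ('p \<Rightarrow> 'a \<Rightarrow> bool) \<Rightarrow> ('r \<Rightarrow> 'a \<Rightarrow> 'a \<Rightarrow> bool) \<Rightarrow> ('a \<Rightarrow> 'a \<Rightarrow> bool) \<Rightarrow>
   ('b \<Rightarrow> 'a) \<Rightarrow> bool" where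
  "oemb B UB RB LB C UC RC LC f \<longleftrightarrow>
     emb B UB RB C UC RC f \<and> (\<forall>x\<in>B. \<forall>y\<in>B. LB x y \<longleftrightarrow> LC (f x) (f y))"

definition strict_linorder_on :: "'a set \<Rightarrow> ('a \<Rightarrow> 'a \<Rightarrow> bool) \<Rightarrow> bool" where
  "strict_linorder_on B L \<longleftrightarrow>
     (\<forall>x\<in>B. \<not> L x x) \<and>
     (\<forall>x\<in>B. \<forall>y\<in>B. \<forall>z\<in>B. L x y \<longrightarrow> L y z \<longrightarrow> L x z) \<and>
     (\<forall>x\<in>B. \<forall>y\<in>B. x \<noteq> y \<longrightarrow> L x y \<or> L y x)"

definition irreducible_fstruct :: "('p, 'r) fstruct \<Rightarrow> bool" where
  "irreducible_fstruct M \<longleftrightarrow>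
     (case M of (B, UB, RB) \<Rightarrow> finite B \<and>
        (\<forall>u\<in>B. \<forall>v\<in>B. u \<noteq> v \<longrightarrow> (\<exists>r. RB r u v \<or> RB r v u)))"

definition forb :: "('p, 'r) fstruct set \<Rightarrow> 'a set \<Rightarrow> ('p \<Rightarrow> 'a \<Rightarrow> bool) \<Rightarrow> ('r \<Rightarrow> 'a \<Rightarrow> 'a \<Rightarrow> bool) \<Rightarrow> bool" where
  "forb F C U R \<longleftrightarrow>
     irreflexive_on C R \<and>
     (\<forall>M\<in>F. case M of (B, UB, RB) \<Rightarrow> \<not> (\<exists>f. emb B UB RB C U R f))"

text \<open>Automorphisms of the ordered structure (A,U,R,L) fixing S pointwise
(only the values on A matter).\<close>
definition autS ::
  "'a set \<Rightarrow> ('p \<Rightarrow> 'a \<Rightarrow> bool) \<Rightarrow> ('r \<Rightarrow> 'a \<Rightarrow> 'a \<Rightarrow> bool) \<Rightarrow> ('a \<Rightarrow> 'a \<Rightarrow> bool) \<Rightarrow> 'a set \<Rightarrow>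
   ('a \<Rightarrow> 'a) set" where
  "autS A U R L S =
     {g. bij_betw g A A \<and> oemb A U R L A U R L g \<and> (\<forall>s\<in>S. g s = s)}"

definition fraisse_limit_ordered_forb ::
  "('p, 'r) fstruct set \<Rightarrow> 'a set \<Rightarrow> ('p \<Rightarrow> 'a \<Rightarrow> bool) \<Rightarrow> ('r \<Rightarrow> 'a \<Rightarrow> 'a \<Rightarrow> bool) \<Rightarrow>
   ('a \<Rightarrow> 'a \<Rightarrow> bool) \<Rightarrow> bool" where
  "fraisse_limit_ordered_forb F A U R L \<longleftrightarrow>
     countable A \<and>
     strict_linorder_on A L \<and>
     forb F A U R \<and>
     (\<forall>B UB RB LB. finite (B :: nat set) \<and> strict_linorder_on B LB \<and> forb F B UB RB \<longrightarrow>
        (\<exists>f. oemb B UB RB LB A U R L f)) \<and>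
     (\<forall>B h. finite B \<and> B \<subseteq> A \<and> oemb B U R L A U R L h \<longrightarrow>
        (\<exists>g\<in>autS A U R L {}. \<forall>x\<in>B. g x = h x))"

text \<open>Tuples a in A^I with I a finite totally ordered index set are represented as lists
(I = {0,...,n-1} with its natural order).\<close>

definition S_ordered :: "'a set \<Rightarrow> ('a \<Rightarrow> 'a \<Rightarrow> bool) \<Rightarrow> 'a set \<Rightarrow> 'a list \<Rightarrow> bool" where
  "S_ordered A L S a \<longleftrightarrow>
     set a \<subseteq> A \<and> (\<forall>i<length a. a ! i \<notin> S) \<and>
     (\<forall>i<length a. \<forall>j<length a. i < j \<longrightarrow> L (a ! i) (a ! j))"

definition orbit :: "('a \<Rightarrow> 'a) set \<Rightarrow> 'a list \<Rightarrow> 'a list set" where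
  "orbit G a = {map g a | g. g \<in> G}"

text \<open>Lin_F Orb: finitely supported functions Orb -> F (formal linear combinations).\<close>
definition Lin :: "'a list set \<Rightarrow> ('a list \<Rightarrow> 'k::field) set" where
  "Lin Orb = {v. finite {x. v x \<noteq> 0} \<and> {x. v x \<noteq> 0} \<subseteq> Orb}"

definition subspace_of :: "('a list \<Rightarrow> 'k::field) set \<Rightarrow> ('a list \<Rightarrow> 'k) set \<Rightarrow> bool" where
  "subspace_of V W \<longleftrightarrow> V \<subseteq> W \<and> (\<lambda>_. 0) \<in> V \<and>
     (\<forall>v\<in>V. \<forall>w\<in>V. (\<lambda>x. v x + w x) \<in> V) \<and>
     (\<forall>c. \<forall>v\<in>V. (\<lambda>x. c * v x) \<in> V)"

text \<open>Action of an automorphism g on formal linear combinations: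
g . (sum c_x x) = sum c_x (g x).\<close>
definition act :: "('a \<Rightarrow> 'a) \<Rightarrow> ('a list \<Rightarrow> 'k::field) \<Rightarrow> ('a list \<Rightarrow> 'k)" where
  "act g v = (\<lambda>y. \<Sum>x\<in>{x. v x \<noteq> 0 \<and> map g x = y}. v x)"

definition invariant :: "('a \<Rightarrow> 'a) set \<Rightarrow> ('a list \<Rightarrow> 'k::field) set \<Rightarrow> bool" where
  "invariant G V \<longleftrightarrow> (\<forall>g\<in>G. \<forall>v\<in>V. act g v \<in> V)"

definition duo :: "('r \<Rightarrow> 'a \<Rightarrow> 'a \<Rightarrow> bool) \<Rightarrow> ('a \<Rightarrow> 'a \<Rightarrow> bool) \<Rightarrow> 'a list set \<Rightarrow>
    'a list \<Rightarrow> 'a list \<Rightarrow> bool" where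
  "duo R L Orb a b \<longleftrightarrow> a \<in> Orb \<and> b \<in> Orb \<and>
     (\<forall>i<length a. L (a ! i) (b ! i)) \<and>
     (\<forall>i<length a. \<forall>j<length a. i < j \<longrightarrow> L (b ! i) (a ! j)) \<and>
     (\<forall>r. \<forall>i<length a. \<forall>j<length a.
        (R r (a ! i) (b ! j) \<longleftrightarrow> R r (a ! i) (a ! j)) \<and>
        (R r (a ! i) (a ! j) \<longleftrightarrow> R r (b ! i) (b ! j)) \<and>
        (R r (b ! i) (b ! j) \<longleftrightarrow> R r (b ! i) (a ! j)))"

definition mixJ :: "'a list \<Rightarrow> 'a list \<Rightarrow> nat set \<Rightarrow> 'a list" where
  "mixJ a b J = map (\<lambda>i. if i \<in> J then b ! i else a ! i) [0..<length a]"

definition cog :: "'a list \<Rightarrow> 'a list \<Rightarrow> ('a list \<Rightarrow> 'k::field)" where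
  "cog a b = (\<lambda>y. \<Sum>J\<in>Pow {..<length a}. if y = mixJ a b J then (-1) ^ card J else 0)"

definition Cog :: "('r \<Rightarrow> 'a \<Rightarrow> 'a \<Rightarrow> bool) \<Rightarrow> ('a \<Rightarrow> 'a \<Rightarrow> bool) \<Rightarrow> 'a list set \<Rightarrow>
    ('a list \<Rightarrow> 'k::field) set" where
  "Cog R L Orb = {v. \<exists>C c. finite C \<and> C \<subseteq> {cog a b | a b. duo R L Orb a b} \<and>
                   v = (\<lambda>y. \<Sum>w\<in>C. c w * w y)}"

end

theory Submission
  imports Defs
begin

text \<open>
  Let \<open>v\<close> be a nonzero vector of an invariant subspace \<open>V\<close> and \<open>m\<close> the colexicographically
  greatest tuple in its support. Treat the coordinates \<open>k = n-1, \<dots>, 0\<close> in turn: the extension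
  property of the Fraisse limit provides a twin \<open>x'\<close> of \<open>m\<^sub>k\<close>, a new point right after \<open>m\<^sub>k\<close>,
  unrelated to it and related to everything met so far exactly as \<open>m\<^sub>k\<close> is (irreducibility of the
  forbidden structures makes this one-point extension admissible), and homogeneity an automorphism
  \<open>g\<close> moving \<open>m\<^sub>k\<close> to \<open>x'\<close> and fixing everything else met so far. By maximality of \<open>m\<close>, the vector
  \<open>w - g w\<close> of \<open>V\<close> keeps exactly the terms of \<open>w\<close> with \<open>m\<^sub>k\<close> at position \<open>k\<close> and adds their copies
  with \<open>x'\<close> there, negated. After \<open>n\<close> steps this is a nonzero multiple of the cog of the duo
  \<open>m \<parallel> m'\<close>. Any two duos have the same quantifier-free type over \<open>S\<close>, hence are conjugate under
  \<open>Aut(\<A>/S)\<close>, so \<open>V\<close> contains every cog. Applied to \<open>Lin \<O>\<close> this produces a duo, hence a nonzero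
  cog, and the minimality of \<open>Cog \<O>\<close> follows.
\<close>

section \<open>Mixtures, cogs and the action on formal linear combinations\<close>

lemma length_mixJ [simp]: "length (mixJ a b J) = length a"
  unfolding mixJ_def by simp

lemma nth_mixJ: "i < length a \<Longrightarrow> mixJ a b J ! i = (if i \<in> J then b ! i else a ! i)"
  unfolding mixJ_def by simp

lemma mixJ_empty [simp]: "mixJ a b {} = a"
  by (rule nth_equalityI) (simp_all add: nth_mixJ)

lemma mixJ_all: "length b = length a \<Longrightarrow> mixJ a b {..<length a} = b"
  by (rule nth_equalityI) (simp_all add: nth_mixJ)

lemma map_mixJ: "length b = length a \<Longrightarrow> map g (mixJ a b J) = mixJ (map g a) (map g b) J"
  by (rule nth_equalityI) (simp_all add: nth_mixJ)

lemma mixJ_eq_iff: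
  assumes "\<forall>i<length a. a ! i \<noteq> b ! i" "J \<subseteq> {..<length a}" "J' \<subseteq> {..<length a}"
  shows "mixJ a b J = mixJ a b J' \<longleftrightarrow> J = J'"
proof
  assume eq: "mixJ a b J = mixJ a b J'"
  show "J = J'"
  proof (rule set_eqI)
    fix i
    show "i \<in> J \<longleftrightarrow> i \<in> J'"
    proof (cases "i < length a")
      case True
      with arg_cong[OF eq, of "\<lambda>y. y ! i"] assms(1) show ?thesis
        by (auto simp: nth_mixJ split: if_splits)
    qed (use assms(2,3) in auto)
  qed
qed simp

lemma cog_mixJ:
  assumes "\<forall>i<length a. a ! i \<noteq> b ! i" "J \<subseteq> {..<length a}"
  shows "cog a b (mixJ a b J) = (-1) ^ card J"
proof -
  have "cog a b (mixJ a b J) = (\<Sum>J'\<in>Pow {..<length a}. if J' = J then (-1) ^ card J' else 0)"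
    unfolding cog_def using mixJ_eq_iff[OF assms(1)] assms(2) by (intro sum.cong) auto
  also have "\<dots> = (-1) ^ card J"
    using assms(2) by (simp add: sum.delta')
  finally show ?thesis .
qed

lemma cog_eq_0: "y \<notin> mixJ a b ` Pow {..<length a} \<Longrightarrow> cog a b y = 0"
  unfolding cog_def by (intro sum.neutral) auto

lemma act_eq_0: "(\<And>z. w z \<noteq> 0 \<Longrightarrow> map g z \<noteq> y) \<Longrightarrow> act g w y = 0"
  unfolding act_def by (rule sum.neutral) auto

lemma act_unique_preimage:
  assumes "\<And>z. w z \<noteq> 0 \<Longrightarrow> map g z = y \<Longrightarrow> z = z0"
  shows "act g w y = (if map g z0 = y then w z0 else 0)"
proof -
  have "{z. w z \<noteq> 0 \<and> map g z = y} = (if w z0 \<noteq> 0 \<and> map g z0 = y then {z0} else {})"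
    using assms by auto
  then show ?thesis
    unfolding act_def by simp
qed

lemma act_sum_delta:
  fixes c :: "'i \<Rightarrow> 'k::field"
  assumes "finite I"
  shows "act g (\<lambda>y. \<Sum>i\<in>I. if y = p i then c i else 0) = (\<lambda>y. \<Sum>i\<in>I. if y = map g (p i) then c i else 0)"
proof
  fix y
  let ?v = "\<lambda>y. \<Sum>i\<in>I. if y = p i then c i else 0"
  have supp: "z \<in> p ` I" if "?v z \<noteq> 0" for z
  proof -
    from that obtain i where "i \<in> I" "(if z = p i then c i else 0) \<noteq> 0"
      by (rule sum.not_neutral_contains_not_neutral)
    then show "z \<in> p ` I" by (auto split: if_splits)
  qed
  have "act g ?v y = (\<Sum>z\<in>{z \<in> p ` I. map g z = y}. ?v z)"
    unfolding act_def using assms supp by (intro sum.mono_neutral_left) auto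
  also have "\<dots> = (\<Sum>i\<in>I. \<Sum>z\<in>{z \<in> p ` I. map g z = y}. if z = p i then c i else 0)"
    by (rule sum.swap)
  also have "\<dots> = (\<Sum>i\<in>I. if y = map g (p i) then c i else 0)"
    using assms by (intro sum.cong) (auto simp: sum.delta')
  finally show "act g ?v y = (\<Sum>i\<in>I. if y = map g (p i) then c i else 0)" .
qed

lemma act_cog: "length b = length a \<Longrightarrow> act g (cog a b) = cog (map g a) (map g b)"
  unfolding cog_def by (subst act_sum_delta) (simp_all add: map_mixJ)

lemma map_point_move:
  assumes moved: "g x = x'" and fixed: "\<And>u. u \<in> D \<Longrightarrow> u \<noteq> x \<Longrightarrow> g u = u"
    and z: "set z \<subseteq> D" "k < length z" "\<forall>i<length z. z ! i = x \<longrightarrow> i = k"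
  shows "map g z = (if z ! k = x then z[k := x'] else z)"
proof (rule nth_equalityI)
  fix i assume i: "i < length (map g z)"
  then have zi: "z ! i \<in> D" using z(1) nth_mem[of i z] by auto
  show "map g z ! i = (if z ! k = x then z[k := x'] else z) ! i"
  proof (cases "i = k")
    case True
    then show ?thesis using i moved fixed[OF zi] by simp
  next
    case False
    then have "z ! i \<noteq> x" using z(3) i by auto
    then show ?thesis using i False fixed[OF zi] by simp
  qed
qed simp

lemma act_point_move:
  fixes w :: "'a list \<Rightarrow> 'k::field"
  assumes moved: "g x = x'" "x' \<notin> D" and fixed: "\<And>u. u \<in> D \<Longrightarrow> u \<noteq> x \<Longrightarrow> g u = u"
    and supp: "\<And>z. w z \<noteq> 0 \<Longrightarrow> set z \<subseteq> D \<and> k < length z \<and> (\<forall>i<length z. z ! i = x \<longrightarrow> i = k)"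
    and y: "k < length y"
  shows "act g w y = (if y ! k = x' then w (y[k := x]) else if y ! k = x then 0 else w y)"
proof -
  have map_g: "map g z = (if z ! k = x then z[k := x'] else z)" if "w z \<noteq> 0" for z
    using supp[OF that] by (intro map_point_move[OF moved(1) fixed]) auto
  have x'_free: "z ! k \<noteq> x'" if "w z \<noteq> 0" for z
  proof
    assume "z ! k = x'"
    moreover have "k < length z" "set z \<subseteq> D" using supp[OF that] by blast+
    ultimately show False using moved(2) nth_mem by fastforce
  qed
  define z0 where "z0 = (if y ! k = x' then y[k := x] else y)"
  have "z = z0" if "w z \<noteq> 0" "map g z = y" for z
  proof (cases "z ! k = x")
    case True
    moreover have "k < length z" using supp[OF that(1)] by blast
    moreover have "z[k := x] = z" using True by (metis list_update_id)
    ultimately have "y ! k = x'" "y[k := x] = z" using that(2) map_g[OF that(1)] by auto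
    then show ?thesis unfolding z0_def by simp
  next
    case False
    then show ?thesis using that map_g x'_free unfolding z0_def by simp
  qed
  then have act: "act g w y = (if map g z0 = y then w z0 else 0)"
    by (rule act_unique_preimage)
  consider (at_x') "y ! k = x'" | (at_x) "y ! k = x" "y ! k \<noteq> x'" | (other) "y ! k \<noteq> x" "y ! k \<noteq> x'"
    by blast
  then show ?thesis
  proof cases
    case at_x'
    have "map g z0 = y" if "w z0 \<noteq> 0"
      using map_g[OF that] at_x' y unfolding z0_def by auto
    then show ?thesis using act at_x' unfolding z0_def by auto
  next
    case at_x
    have "map g y \<noteq> y" if "w y \<noteq> 0"
      using map_g[OF that] at_x y by (metis nth_list_update_eq)
    then show ?thesis using act at_x unfolding z0_def by auto
  next
    case other
    then show ?thesis using act map_g[of y] unfolding z0_def by auto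
  qed
qed

lemma diff_act_point_move:
  fixes w :: "'a list \<Rightarrow> 'k::field"
  assumes moved: "g x = x'" "x' \<notin> D" and fixed: "\<And>u. u \<in> D \<Longrightarrow> u \<noteq> x \<Longrightarrow> g u = u"
    and supp: "\<And>z. w z \<noteq> 0 \<Longrightarrow> set z \<subseteq> D \<and> k < length z \<and> (\<forall>i<length z. z ! i = x \<longrightarrow> i = k)"
  shows "w y - act g w y =
    (if k < length y \<and> y ! k = x then w y
     else if k < length y \<and> y ! k = x' then - w (y[k := x]) else 0)"
proof (cases "k < length y")
  case True
  have "w y = 0" if "y ! k = x'"
  proof (rule ccontr)
    assume "w y \<noteq> 0"
    then have "set y \<subseteq> D" using supp by blast
    then show False using moved(2) that True nth_mem by fastforce
  qed
  then show ?thesis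
    using act_point_move[where w = w, OF moved fixed supp True] True by auto
next
  case False
  then have "w y = 0" "act g w y = 0"
    using supp by (auto intro: act_eq_0)
  then show ?thesis using False by simp
qed

lemma subspace_of_sum:
  assumes "subspace_of V W" "finite C" "C \<subseteq> V"
  shows "(\<lambda>y. \<Sum>w\<in>C. c w * w y) \<in> V"
  using assms(2,3)
proof (induction C rule: finite_induct)
  case empty
  then show ?case using assms(1) unfolding subspace_of_def by simp
next
  case (insert u C)
  then have "(\<lambda>y. c u * u y + (\<Sum>w\<in>C. c w * w y)) \<in> V"
    using assms(1) unfolding subspace_of_def by simp
  then show ?case using insert(1,2) by simp
qed

lemma subspace_of_Lin: "subspace_of (Lin Orb :: ('a list \<Rightarrow> 'k::field) set) (Lin Orb)"
  unfolding subspace_of_def Lin_def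
proof (intro conjI ballI allI)
  fix v w :: "'a list \<Rightarrow> 'k" assume "v \<in> {v. finite {x. v x \<noteq> 0} \<and> {x. v x \<noteq> 0} \<subseteq> Orb}"
    "w \<in> {v. finite {x. v x \<noteq> 0} \<and> {x. v x \<noteq> 0} \<subseteq> Orb}"
  moreover have "{x. v x + w x \<noteq> 0} \<subseteq> {x. v x \<noteq> 0} \<union> {x. w x \<noteq> 0}" by auto
  ultimately show "(\<lambda>x. v x + w x) \<in> {v. finite {x. v x \<noteq> 0} \<and> {x. v x \<noteq> 0} \<subseteq> Orb}"
    by (auto intro: finite_subset)
qed (auto intro: finite_subset)

lemma subspace_of_diff_act:
  assumes V: "subspace_of V W" "invariant G V" and "w \<in> V" "g \<in> G"
  shows "(\<lambda>y. w y - act g w y) \<in> V"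
proof -
  have add: "(\<lambda>x. u x + v x) \<in> V" and scale: "(\<lambda>x. c * u x) \<in> V" if "u \<in> V" "v \<in> V" for u v c
    using V(1) that by (simp_all add: subspace_of_def)
  have "act g w \<in> V"
    using V(2) assms(3,4) by (simp add: invariant_def)
  from add[OF assms(3) scale[OF this this, of "-1"]] show ?thesis by simp
qed

lemma invariant_Lin:
  assumes "\<And>g x. g \<in> G \<Longrightarrow> x \<in> Orb \<Longrightarrow> map g x \<in> Orb"
  shows "invariant G (Lin Orb :: ('a list \<Rightarrow> 'k::field) set)"
  unfolding invariant_def
proof (intro ballI)
  fix g and v :: "'a list \<Rightarrow> 'k" assume g: "g \<in> G" and v: "v \<in> Lin Orb"
  have supp: "{y. act g v y \<noteq> 0} \<subseteq> map g ` {x. v x \<noteq> 0}"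
  proof
    fix y assume "y \<in> {y. act g v y \<noteq> 0}"
    then obtain x where "v x \<noteq> 0" "map g x = y"
      using act_eq_0[of v g y] by auto
    then show "y \<in> map g ` {x. v x \<noteq> 0}" by blast
  qed
  have "map g ` {x. v x \<noteq> 0} \<subseteq> Orb"
    using assms g v by (auto simp: Lin_def)
  moreover have "finite (map g ` {x. v x \<noteq> 0})"
    using v by (simp add: Lin_def)
  ultimately show "act g v \<in> Lin Orb"
    using supp by (auto simp: Lin_def intro: finite_subset)
qed

section \<open>Embeddings and forbidden substructures\<close>

lemma oemb_comp:
  assumes f: "oemb B UB RB LB C UC RC LC f" and g: "oemb C UC RC LC D UD RD LD g"
  shows "oemb B UB RB LB D UD RD LD (g \<circ> f)"
proof -
  have fB: "f x \<in> C" if "x \<in> B" for x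
    using f that by (simp add: oemb_def emb_def image_subset_iff)
  have "inj_on g (f ` B)"
    using g fB by (simp add: oemb_def emb_def) (meson image_subsetI inj_on_subset)
  then have "inj_on (g \<circ> f) B"
    using f by (intro comp_inj_on) (simp_all add: oemb_def emb_def)
  then show ?thesis
    using f g fB by (simp add: oemb_def emb_def image_subset_iff)
qed

lemma oemb_subset:
  assumes "oemb B UB RB LB C UC RC LC f" "B' \<subseteq> B"
  shows "oemb B' UB RB LB C UC RC LC f"
  using assms unfolding oemb_def emb_def
  by (metis (no_types, lifting) image_mono inj_on_subset order_trans subsetD)

lemma oemb_transport:
  assumes f: "oemb C UB RB LB A U R L f" and e: "oemb C UB RB LB A U R L e"
  shows "oemb (f ` C) U R L A U R L (e \<circ> inv_into C f)"
proof -
  have inv: "inv_into C f (f i) = i" if "i \<in> C" for i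
    using f that by (simp add: oemb_def emb_def)
  have "inj_on e C" "e ` C \<subseteq> A" using e by (simp_all add: oemb_def emb_def)
  then have "inj_on (e \<circ> inv_into C f) (f ` C)" "(e \<circ> inv_into C f) ` f ` C \<subseteq> A"
    using inv by (auto simp: inj_on_def)
  then show ?thesis
    using e f inv by (simp add: oemb_def emb_def)
qed

text \<open>An irreducible structure embedded into the pullback never meets two points with the same
  image, as these are unrelated, so the embedding descends to \<open>A\<close>.\<close>

lemma emb_pullback:
  assumes M: "irreducible_fstruct (BM, UM, RM)" and f: "emb BM UM RM B UB RB f"
    and irrefl: "irreflexive_on A R" and into: "\<pi> ` B \<subseteq> A"
    and UB: "\<And>p i. i \<in> B \<Longrightarrow> UB p i = U p (\<pi> i)"
    and RB: "\<And>r i j. i \<in> B \<Longrightarrow> j \<in> B \<Longrightarrow> RB r i j \<longleftrightarrow> \<pi> i \<noteq> \<pi> j \<and> R r (\<pi> i) (\<pi> j)"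
  shows "emb BM UM RM A U R (\<pi> \<circ> f)"
proof -
  have fB: "f u \<in> B" if "u \<in> BM" for u
    using f that by (simp add: emb_def image_subset_iff)
  have RM: "RM r u v \<longleftrightarrow> RB r (f u) (f v)" if "u \<in> BM" "v \<in> BM" for r u v
    using f that by (simp add: emb_def)
  have "inj_on (\<pi> \<circ> f) BM"
  proof (rule inj_onI, rule ccontr)
    fix u v assume uv: "u \<in> BM" "v \<in> BM" "(\<pi> \<circ> f) u = (\<pi> \<circ> f) v" "u \<noteq> v"
    then have "\<exists>r. RM r u v \<or> RM r v u"
      using M by (simp add: irreducible_fstruct_def)
    then obtain r where "RB r (f u) (f v) \<or> RB r (f v) (f u)"
      using RM uv(1,2) by blast
    then show False using uv fB RB by auto
  qed
  moreover have "RM r u v \<longleftrightarrow> R r (\<pi> (f u)) (\<pi> (f v))" if "u \<in> BM" "v \<in> BM" for r u v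
    using RM[OF that] RB[OF fB fB, of u v r] irrefl into fB[OF that(1)] that
    by (auto simp: irreflexive_on_def)
  ultimately show ?thesis
    using f fB into UB by (simp add: emb_def image_subset_iff)
qed

lemma forb_pullback:
  assumes irr: "\<forall>M\<in>F. irreducible_fstruct M" and forb: "forb F A U R"
    and into: "\<pi> ` B \<subseteq> A"
    and UB: "\<And>p i. i \<in> B \<Longrightarrow> UB p i = U p (\<pi> i)"
    and RB: "\<And>r i j. i \<in> B \<Longrightarrow> j \<in> B \<Longrightarrow> RB r i j \<longleftrightarrow> \<pi> i \<noteq> \<pi> j \<and> R r (\<pi> i) (\<pi> j)"
  shows "forb F B UB RB"
  unfolding forb_def
proof (intro conjI ballI)
  show "irreflexive_on B RB"
    using RB by (simp add: irreflexive_on_def)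
next
  fix M assume "M \<in> F"
  obtain BM UM RM where M: "M = (BM, UM, RM)" by (cases M) auto
  have "\<not> emb BM UM RM B UB RB f" for f
  proof
    assume f: "emb BM UM RM B UB RB f"
    have "irreducible_fstruct (BM, UM, RM)" using irr \<open>M \<in> F\<close> by (simp add: M)
    moreover have "irreflexive_on A R" using forb by (simp add: forb_def)
    ultimately have "emb BM UM RM A U R (\<pi> \<circ> f)"
      using emb_pullback[OF _ f _ into UB RB] by blast
    then show False
      using forb \<open>M \<in> F\<close> by (auto simp: forb_def M)
  qed
  then show "case M of (BM, UM, RM) \<Rightarrow> \<not> (\<exists>f. emb BM UM RM B UB RB f)"
    by (simp add: M)
qed

lemma strict_linorder_on_double_point:
  assumes L: "strict_linorder_on A L" and into: "\<pi> ` B \<subseteq> A" and inj: "inj_on \<pi> (B - {N})"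
    and j0: "j0 \<in> B" "j0 \<noteq> N" "\<pi> N = \<pi> j0"
  shows "strict_linorder_on B (\<lambda>i j. L (\<pi> i) (\<pi> j) \<or> (i = j0 \<and> j = N))"
    (is "strict_linorder_on B ?LB")
proof -
  have A: "\<pi> i \<in> A" if "i \<in> B" for i using into that by blast
  have irrefl: "\<not> L x x" if "x \<in> A" for x
    using L that by (simp add: strict_linorder_on_def)
  have trans: "L x z" if "L x y" "L y z" "x \<in> A" "y \<in> A" "z \<in> A" for x y z
    using L that unfolding strict_linorder_on_def by blast
  have total: "L x y \<or> L y x" if "x \<noteq> y" "x \<in> A" "y \<in> A" for x y
    using L that unfolding strict_linorder_on_def by blast
  show ?thesis
    unfolding strict_linorder_on_def
  proof (intro conjI ballI impI)
    fix i assume "i \<in> B"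
    then show "\<not> ?LB i i" using irrefl A j0(2) by blast
  next
    fix i j k assume ijk: "i \<in> B" "j \<in> B" "k \<in> B" and "?LB i j" "?LB j k"
    then consider "L (\<pi> i) (\<pi> j)" "L (\<pi> j) (\<pi> k)" | "L (\<pi> i) (\<pi> j)" "\<pi> j = \<pi> k"
      | "\<pi> i = \<pi> j" "L (\<pi> j) (\<pi> k)"
      using j0 by metis
    then have "L (\<pi> i) (\<pi> k)"
    proof cases
      case 1
      then show ?thesis using trans[OF _ _ A A A] ijk by blast
    qed simp_all
    then show "?LB i k" by blast
  next
    fix i j assume ij: "i \<in> B" "j \<in> B" "i \<noteq> j"
    show "?LB i j \<or> ?LB j i"
    proof (cases "\<pi> i = \<pi> j")
      case True
      have "i = N \<or> j = N" using inj_onD[OF inj _ _] True ij by blast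
      moreover have "i = j0 \<or> j = j0"
        using inj_onD[OF inj _ _] True ij j0 by (metis DiffI singletonD)
      ultimately show ?thesis using ij(3) j0(2) by blast
    next
      case False
      then show ?thesis using total[OF _ A A] ij by blast
    qed
  qed
qed

section \<open>Homogeneity, quantifier-free types and twins\<close>

locale ordered_fraisse_limit =
  fixes F :: "('p, 'r) fstruct set"
    and A :: "'a set" and U :: "'p \<Rightarrow> 'a \<Rightarrow> bool" and R :: "'r \<Rightarrow> 'a \<Rightarrow> 'a \<Rightarrow> bool"
    and L :: "'a \<Rightarrow> 'a \<Rightarrow> bool"
  assumes irreducible: "\<forall>M\<in>F. irreducible_fstruct M"
    and fraisse_limit: "fraisse_limit_ordered_forb F A U R L"
begin

lemma strict_linorder: "strict_linorder_on A L"
  and forb_A: "forb F A U R"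
  and extension: "finite (B :: nat set) \<Longrightarrow> strict_linorder_on B LB \<Longrightarrow> forb F B UB RB \<Longrightarrow>
    \<exists>f. oemb B UB RB LB A U R L f"
  and homogeneous: "finite X \<Longrightarrow> X \<subseteq> A \<Longrightarrow> oemb X U R L A U R L h \<Longrightarrow>
    \<exists>g\<in>autS A U R L {}. \<forall>x\<in>X. g x = h x"
  using fraisse_limit unfolding fraisse_limit_ordered_forb_def by blast+

lemma L_irrefl: "x \<in> A \<Longrightarrow> \<not> L x x"
  and L_trans: "L x y \<Longrightarrow> L y z \<Longrightarrow> x \<in> A \<Longrightarrow> y \<in> A \<Longrightarrow> z \<in> A \<Longrightarrow> L x z"
  and L_total: "x \<noteq> y \<Longrightarrow> x \<in> A \<Longrightarrow> y \<in> A \<Longrightarrow> L x y \<or> L y x"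
  using strict_linorder unfolding strict_linorder_on_def by blast+

lemma L_asym: "L x y \<Longrightarrow> x \<in> A \<Longrightarrow> y \<in> A \<Longrightarrow> \<not> L y x"
  using L_trans L_irrefl by blast

lemma R_irrefl: "x \<in> A \<Longrightarrow> \<not> R r x x"
  using forb_A unfolding forb_def irreflexive_on_def by blast

lemma autS_in: "g \<in> autS A U R L T \<Longrightarrow> x \<in> A \<Longrightarrow> g x \<in> A"
  and autS_fix: "g \<in> autS A U R L T \<Longrightarrow> s \<in> T \<Longrightarrow> g s = s"
  and autS_oemb: "g \<in> autS A U R L T \<Longrightarrow> oemb A U R L A U R L g"
  unfolding autS_def bij_betw_def by auto

lemma autS_U: "g \<in> autS A U R L T \<Longrightarrow> x \<in> A \<Longrightarrow> U p (g x) = U p x"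
  and autS_R: "g \<in> autS A U R L T \<Longrightarrow> x \<in> A \<Longrightarrow> y \<in> A \<Longrightarrow> R r (g x) (g y) = R r x y"
  and autS_L: "g \<in> autS A U R L T \<Longrightarrow> x \<in> A \<Longrightarrow> y \<in> A \<Longrightarrow> L (g x) (g y) = L x y"
  by (simp_all add: autS_def oemb_def emb_def)

lemma id_autS: "id \<in> autS A U R L T"
  by (simp add: autS_def oemb_def emb_def)

lemma autS_comp: "g \<in> autS A U R L T \<Longrightarrow> h \<in> autS A U R L T \<Longrightarrow> g \<circ> h \<in> autS A U R L T"
  unfolding autS_def by (auto intro: bij_betw_trans oemb_comp)

lemma homogeneous_over:
  assumes "finite X" "X \<subseteq> A" "oemb X U R L A U R L h" "T \<subseteq> X" "\<forall>s\<in>T. h s = s"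
  shows "\<exists>g\<in>autS A U R L T. \<forall>x\<in>X. g x = h x"
proof -
  obtain g where g: "g \<in> autS A U R L {}" "\<forall>x\<in>X. g x = h x"
    using homogeneous assms(1-3) by blast
  then have "g \<in> autS A U R L T"
    using assms(4,5) by (auto simp: autS_def)
  with g(2) show ?thesis by blast
qed

definition same_atoms :: "'a \<Rightarrow> 'a \<Rightarrow> 'a \<Rightarrow> 'a \<Rightarrow> bool" where
  "same_atoms x y x' y' \<longleftrightarrow> (\<forall>r. R r x y = R r x' y') \<and> L x y = L x' y'"

definition same_qf_type :: "'a list \<Rightarrow> 'a list \<Rightarrow> bool" where
  "same_qf_type xs ys \<longleftrightarrow> length xs = length ys \<and>
     (\<forall>i<length xs. \<forall>p. U p (xs ! i) = U p (ys ! i)) \<and>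
     (\<forall>i<length xs. \<forall>j<length xs. same_atoms (xs ! i) (xs ! j) (ys ! i) (ys ! j))"

definition same_atoms_over :: "'a set \<Rightarrow> 'a \<Rightarrow> 'a \<Rightarrow> bool" where
  "same_atoms_over T x y \<longleftrightarrow> (\<forall>s\<in>T. same_atoms x s y s \<and> same_atoms s x s y)"

lemma same_qf_type_refl: "same_qf_type xs xs"
  by (simp add: same_qf_type_def same_atoms_def)

lemma same_qf_type_trans: "same_qf_type xs ys \<Longrightarrow> same_qf_type ys zs \<Longrightarrow> same_qf_type xs zs"
  by (simp add: same_qf_type_def same_atoms_def)

lemma same_qf_type_sym: "same_qf_type xs ys \<Longrightarrow> same_qf_type ys xs"
  by (simp add: same_qf_type_def same_atoms_def)

lemma same_atoms_trans: "same_atoms x y x' y' \<Longrightarrow> same_atoms x' y' x'' y'' \<Longrightarrow> same_atoms x y x'' y''"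
  by (simp add: same_atoms_def)

lemma same_atoms_over_trans: "same_atoms_over T x y \<Longrightarrow> same_atoms_over T y z \<Longrightarrow> same_atoms_over T x z"
  by (simp add: same_atoms_over_def same_atoms_def)

lemma same_atoms_over_sym: "same_atoms_over T x y \<Longrightarrow> same_atoms_over T y x"
  by (simp add: same_atoms_over_def same_atoms_def)

lemma same_qf_type_map_autS:
  assumes g: "g \<in> autS A U R L T" and xs: "set xs \<subseteq> A"
  shows "same_qf_type xs (map g xs)"
proof -
  have "xs ! i \<in> A" if "i < length xs" for i
    using xs that nth_mem by blast
  then show ?thesis
    by (simp add: same_qf_type_def same_atoms_def autS_U[OF g] autS_R[OF g] autS_L[OF g])
qed

lemma same_atoms_over_autS:
  assumes "g \<in> autS A U R L T" "x \<in> A" "T \<subseteq> A"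
  shows "same_atoms_over T x (g x)"
  unfolding same_atoms_over_def same_atoms_def
proof (intro ballI conjI allI)
  fix s r assume "s \<in> T"
  then have "s \<in> A" "g s = s" using assms(3) autS_fix[OF assms(1)] by auto
  then show "R r x s = R r (g x) s" "L x s = L (g x) s" "R r s x = R r s (g x)" "L s x = L s (g x)"
    using autS_R[OF assms(1)] autS_L[OF assms(1)] assms(2) by metis+
qed

lemma same_qf_type_append:
  assumes "same_qf_type xs ys" "same_qf_type xs' ys'"
    and "\<And>i j. i < length xs \<Longrightarrow> j < length xs' \<Longrightarrow>
      same_atoms (xs ! i) (xs' ! j) (ys ! i) (ys' ! j) \<and> same_atoms (xs' ! j) (xs ! i) (ys' ! j) (ys ! i)"
  shows "same_qf_type (xs @ xs') (ys @ ys')"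
proof -
  have len: "length xs = length ys" "length xs' = length ys'"
    using assms(1,2) by (simp_all add: same_qf_type_def)
  have nth: "(zs @ zs') ! i = (if i < length xs then zs ! i else zs' ! (i - length xs))"
    if "length zs = length xs" for zs zs' :: "'a list" and i
    using that by (simp add: nth_append)
  show ?thesis
    unfolding same_qf_type_def
  proof (intro conjI allI impI)
    show "length (xs @ xs') = length (ys @ ys')" using len by simp
  next
    fix i p assume "i < length (xs @ xs')"
    then show "U p ((xs @ xs') ! i) = U p ((ys @ ys') ! i)"
      using assms(1,2) len by (auto simp: nth same_qf_type_def)
  next
    fix i j assume "i < length (xs @ xs')" "j < length (xs @ xs')"
    then show "same_atoms ((xs @ xs') ! i) ((xs @ xs') ! j) ((ys @ ys') ! i) ((ys @ ys') ! j)"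
      using assms len by (auto simp: nth same_qf_type_def)
  qed
qed

lemma same_qf_type_nth_eq_iff:
  assumes "same_qf_type xs ys" "set xs \<subseteq> A" "set ys \<subseteq> A" "i < length xs" "j < length xs"
  shows "xs ! i = xs ! j \<longleftrightarrow> ys ! i = ys ! j"
proof -
  have "xs ! i \<in> A" "xs ! j \<in> A" "ys ! i \<in> A" "ys ! j \<in> A"
    using assms by (auto simp: same_qf_type_def)
  moreover have "L (xs ! i) (xs ! j) = L (ys ! i) (ys ! j)" "L (xs ! j) (xs ! i) = L (ys ! j) (ys ! i)"
    using assms(1,4,5) by (simp_all add: same_qf_type_def same_atoms_def)
  ultimately show ?thesis
    using L_total L_irrefl by metis
qed

lemma same_qf_type_oemb:
  assumes eq: "same_qf_type xs ys" and A: "set xs \<subseteq> A" "set ys \<subseteq> A"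
    and h: "\<And>i. i < length xs \<Longrightarrow> h (xs ! i) = ys ! i"
  shows "oemb (set xs) U R L A U R L h"
  unfolding oemb_def emb_def
proof (intro conjI allI ballI subsetI)
  show "inj_on h (set xs)"
  proof (rule inj_onI)
    fix x y assume "x \<in> set xs" "y \<in> set xs" "h x = h y"
    then obtain i j where "i < length xs" "j < length xs" "x = xs ! i" "y = xs ! j" "ys ! i = ys ! j"
      by (metis in_set_conv_nth h)
    then show "x = y" using same_qf_type_nth_eq_iff[OF eq A] by blast
  qed
next
  fix z assume "z \<in> h ` set xs"
  then obtain i where "i < length xs" "z = ys ! i"
    by (metis imageE in_set_conv_nth h)
  moreover have "length ys = length xs" using eq by (simp add: same_qf_type_def)
  ultimately show "z \<in> A" using A(2) nth_mem by (metis subsetD)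
next
  fix x y p r assume "x \<in> set xs" "y \<in> set xs"
  then obtain i j where "i < length xs" "j < length xs" "x = xs ! i" "y = xs ! j"
    by (metis in_set_conv_nth)
  then show "U p x = U p (h x)" "R r x y = R r (h x) (h y)" "L x y = L (h x) (h y)"
    using eq by (simp_all add: h same_qf_type_def same_atoms_def)
qed

lemma same_qf_type_conjugate:
  assumes eq: "same_qf_type xs ys" and A: "set xs \<subseteq> A" "set ys \<subseteq> A"
  shows "\<exists>g\<in>autS A U R L {}. map g xs = ys"
proof -
  define h where "h x = ys ! (LEAST i. i < length xs \<and> xs ! i = x)" for x
  have h: "h (xs ! i) = ys ! i" if "i < length xs" for i
  proof -
    define k where "k = (LEAST k. k < length xs \<and> xs ! k = xs ! i)"
    have "k < length xs \<and> xs ! k = xs ! i"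
      unfolding k_def by (rule LeastI[where P = "\<lambda>k. k < length xs \<and> xs ! k = xs ! i" and k = i]) (simp add: that)
    then show ?thesis
      using same_qf_type_nth_eq_iff[OF eq A _ that] unfolding h_def k_def[symmetric] by blast
  qed
  obtain g where g: "g \<in> autS A U R L {}" "\<forall>x\<in>set xs. g x = h x"
    using homogeneous[OF finite_set A(1) same_qf_type_oemb[OF eq A h]] by blast
  moreover have "length ys = length xs" using eq by (simp add: same_qf_type_def)
  ultimately have "map g xs = ys"
    by (intro nth_equalityI) (simp_all add: h)
  with g(1) show ?thesis by blast
qed

lemma same_qf_type_conjugate_over:
  assumes "finite T" "T \<subseteq> A" "set xs \<subseteq> A" "set ys \<subseteq> A" "same_qf_type xs ys"
    and "\<And>i. i < length xs \<Longrightarrow> same_atoms_over T (xs ! i) (ys ! i)"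
  shows "\<exists>g\<in>autS A U R L T. map g xs = ys"
proof -
  \<comment> \<open>fixing \<open>T\<close> pointwise means fixing an enumeration \<open>ts\<close> of it\<close>
  obtain ts where ts: "set ts = T"
    using finite_list assms(1) by blast
  have "same_qf_type (xs @ ts) (ys @ ts)"
    using assms(5,6) ts by (intro same_qf_type_append same_qf_type_refl) (auto simp: same_atoms_over_def)
  moreover have "set (xs @ ts) \<subseteq> A" "set (ys @ ts) \<subseteq> A"
    using assms(2-4) ts by auto
  ultimately obtain g where g: "g \<in> autS A U R L {}" "map g (xs @ ts) = ys @ ts"
    using same_qf_type_conjugate by blast
  moreover have "length (map g xs) = length ys"
    using assms(5) by (simp add: same_qf_type_def)
  ultimately have "map g xs = ys" "map g ts = map id ts"
    by (simp_all add: append_eq_append_conv)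
  then have "\<forall>s\<in>T. g s = s"
    using ts map_eq_conv[of g ts id] by simp
  then have "g \<in> autS A U R L T"
    using g(1) by (simp add: autS_def)
  with \<open>map g xs = ys\<close> show ?thesis by blast
qed

lemma extension_over:
  assumes B: "finite (B :: nat set)" "strict_linorder_on B LB" "forb F B UB RB"
    and C: "C \<subseteq> B" and e: "oemb C UB RB LB A U R L e"
  shows "\<exists>f. oemb B UB RB LB A U R L f \<and> (\<forall>i\<in>C. f i = e i)"
proof -
  obtain f0 where f0: "oemb B UB RB LB A U R L f0"
    using extension B by blast
  have f0C: "oemb C UB RB LB A U R L f0"
    using oemb_subset[OF f0 C] .
  moreover have "finite (f0 ` C)" "f0 ` C \<subseteq> A"
    using B(1) C f0C by (auto intro: finite_subset simp: oemb_def emb_def)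
  ultimately obtain \<sigma> where \<sigma>: "\<sigma> \<in> autS A U R L {}" "\<forall>x\<in>f0 ` C. \<sigma> x = (e \<circ> inv_into C f0) x"
    using homogeneous oemb_transport[OF f0C e] by blast
  have "oemb B UB RB LB A U R L (\<sigma> \<circ> f0)"
    using oemb_comp[OF f0 autS_oemb[OF \<sigma>(1)]] .
  moreover have "\<forall>i\<in>C. (\<sigma> \<circ> f0) i = e i"
    using \<sigma>(2) f0C by (simp add: oemb_def emb_def)
  ultimately show ?thesis by blast
qed

definition twin :: "'a set \<Rightarrow> 'a \<Rightarrow> 'a \<Rightarrow> bool" where
  "twin D x x' \<longleftrightarrow> x' \<in> A \<and> x' \<notin> D \<and> L x x' \<and> (\<forall>r. \<not> R r x x' \<and> \<not> R r x' x) \<and>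
     (\<forall>p. U p x' = U p x) \<and> (\<forall>y\<in>D - {x}. same_atoms y x' y x \<and> same_atoms x' y x y)"

lemma twin_mono: "twin D x x' \<Longrightarrow> D' \<subseteq> D \<Longrightarrow> twin D' x x'"
  unfolding twin_def by blast

lemma twin_conjugate:
  assumes tw: "twin D x x'" and D: "finite D" "D \<subseteq> A" "x \<in> D" and T: "T \<subseteq> D" "x \<notin> T"
  shows "\<exists>g\<in>autS A U R L T. g x = x' \<and> (\<forall>y\<in>D - {x}. g y = y)"
proof -
  define h where "h y = (if y = x then x' else y)" for y
  have x': "x' \<in> A" "x' \<notin> D" using tw by (simp_all add: twin_def)
  have "oemb D U R L A U R L h"
    unfolding oemb_def emb_def
  proof (intro conjI allI ballI)
    show "inj_on h D" using x'(2) by (auto simp: h_def inj_on_def)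
    show "h ` D \<subseteq> A" using D(2) x'(1) by (auto simp: h_def)
  next
    fix y z p r assume yz: "y \<in> D" "z \<in> D"
    then have "y \<in> A" "z \<in> A" using D(2) by auto
    then show "U p y = U p (h y)" "R r y z = R r (h y) (h z)" "L y z = L (h y) (h z)"
      using tw yz x'(1) by (auto simp: h_def twin_def same_atoms_def R_irrefl L_irrefl)
  qed
  moreover have "\<forall>s\<in>T. h s = s" using T(2) by (auto simp: h_def)
  ultimately obtain g where g: "g \<in> autS A U R L T" "\<forall>y\<in>D. g y = h y"
    using homogeneous_over D(1,2) T(1) by blast
  moreover have "g x = x'" using g(2) D(3) by (simp add: h_def)
  moreover have "\<forall>y\<in>D - {x}. g y = y" using g(2) by (simp add: h_def)
  ultimately show ?thesis by blast
qed

text \<open>The structure realised by \<open>f\<close> is \<open>D\<close>, indexed by \<open>e\<close>, together with a copy \<open>N\<close> of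
  \<open>x = e j0\<close> placed right after \<open>x\<close> and unrelated to it.\<close>

lemma twin_if_realises_doubling:
  assumes e: "bij_betw e {0..<N} D" "j0 < N" "e j0 = x"
    and \<pi>: "\<And>j. \<pi> j = (if j = N then x else e j)"
    and f: "oemb {0..<Suc N} (\<lambda>p j. U p (\<pi> j)) (\<lambda>r i j. \<pi> i \<noteq> \<pi> j \<and> R r (\<pi> i) (\<pi> j))
      (\<lambda>i j. L (\<pi> i) (\<pi> j) \<or> (i = j0 \<and> j = N)) A U R L f"
    and fe: "\<forall>i<N. f i = e i"
  shows "twin D x (f N)"
proof -
  have fU: "U p (f i) = U p (\<pi> i)"
    and fR: "R r (f i) (f j) \<longleftrightarrow> \<pi> i \<noteq> \<pi> j \<and> R r (\<pi> i) (\<pi> j)"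
    and fL: "L (f i) (f j) \<longleftrightarrow> L (\<pi> i) (\<pi> j) \<or> (i = j0 \<and> j = N)"
    if "i \<le> N" "j \<le> N" for p r i j
    using f that by (simp_all add: oemb_def emb_def)
  have "f N \<notin> D"
  proof
    assume "f N \<in> D"
    then obtain j where "j < N" "f N = f j"
      using e(1) fe by (auto simp: bij_betw_def)
    moreover have "inj_on f {0..<Suc N}" using f by (simp add: oemb_def emb_def)
    ultimately show False using inj_onD[of f "{0..<Suc N}" N j] by simp
  qed
  moreover have "f N \<in> A" using f by (simp add: oemb_def emb_def image_subset_iff)
  moreover have "same_atoms y (f N) y x \<and> same_atoms (f N) y x y" if "y \<in> D - {x}" for y
  proof -
    have "y \<in> e ` {0..<N}" using e(1) that by (simp add: bij_betw_def)
    then obtain j where j: "j < N" "y = e j" by auto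
    then have "j \<noteq> j0" "\<pi> j = y" "\<pi> N = x" "x \<noteq> y" using that e(3) \<pi> by auto
    then show ?thesis
      using fR[of j N] fR[of N j] fL[of j N] fL[of N j] j fe by (simp add: same_atoms_def)
  qed
  moreover have "U p (f N) = U p x" "\<not> R r x (f N)" "\<not> R r (f N) x" "L x (f N)" for p r
    using fU[of N N] fR[of j0 N] fR[of N j0] fL[of j0 N] e(2,3) fe \<pi> by simp_all
  ultimately show "twin D x (f N)"
    by (simp add: twin_def)
qed

lemma twin_exists:
  assumes D: "finite D" "D \<subseteq> A" "x \<in> D"
  shows "\<exists>x'. twin D x x'"
proof -
  define N where "N = card D"
  obtain e where e: "bij_betw e {0..<N} D"
    using ex_bij_betw_nat_finite[OF D(1)] unfolding N_def by blast
  then obtain j0 where j0: "j0 < N" "e j0 = x"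
    using D(3) by (auto simp: bij_betw_def)
  have eA: "e j \<in> A" if "j < N" for j
    using e D(2) that by (auto simp: bij_betw_def)
  define \<pi> where "\<pi> j = (if j = N then x else e j)" for j
  define B where "B = {0..<Suc N}"
  define UB where "UB p j = U p (\<pi> j)" for p j
  define RB where "RB r i j \<longleftrightarrow> \<pi> i \<noteq> \<pi> j \<and> R r (\<pi> i) (\<pi> j)" for r i j
  define LB where "LB i j \<longleftrightarrow> L (\<pi> i) (\<pi> j) \<or> (i = j0 \<and> j = N)" for i j
  have \<pi>A: "\<pi> ` B \<subseteq> A"
    using eA D(2,3) by (auto simp: \<pi>_def B_def)
  have "inj_on \<pi> (B - {N})"
    using e by (auto simp: \<pi>_def B_def bij_betw_def inj_on_def)
  then have "strict_linorder_on B LB"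
    unfolding LB_def using strict_linorder_on_double_point[OF strict_linorder \<pi>A] j0
    by (simp add: B_def \<pi>_def)
  moreover have "forb F B UB RB"
    using forb_pullback[OF irreducible forb_A \<pi>A] by (simp add: UB_def RB_def)
  moreover have "oemb {0..<N} UB RB LB A U R L e"
    using e eA R_irrefl
    by (auto simp: oemb_def emb_def bij_betw_def UB_def RB_def LB_def \<pi>_def)
  ultimately obtain f where f: "oemb B UB RB LB A U R L f" "\<forall>i\<in>{0..<N}. f i = e i"
    using extension_over[of B LB UB RB "{0..<N}" e] by (auto simp: B_def)
  have "twin D x (f N)"
    using twin_if_realises_doubling[OF e j0, of \<pi> f] f
    unfolding \<pi>_def B_def UB_def RB_def LB_def by (simp add: fun_eq_iff)
  then show ?thesis by blast
qed

definition colex_le :: "nat \<Rightarrow> 'a list \<Rightarrow> 'a list \<Rightarrow> bool" where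
  "colex_le k y m \<longleftrightarrow>
     (\<forall>i<k. (\<forall>j. i < j \<and> j < k \<longrightarrow> y ! j = m ! j) \<longrightarrow> y ! i = m ! i \<or> L (y ! i) (m ! i))"

lemma colex_le_SucD: "colex_le (Suc k) y m \<Longrightarrow> y ! k = m ! k \<or> L (y ! k) (m ! k)"
  unfolding colex_le_def by auto

lemma colex_le_Suc_eq:
  assumes "colex_le (Suc k) y m" "y ! k = m ! k"
  shows "colex_le k y m"
  unfolding colex_le_def
proof (intro allI impI)
  fix i assume "i < k" "\<forall>j. i < j \<and> j < k \<longrightarrow> y ! j = m ! j"
  then have "\<forall>j. i < j \<and> j < Suc k \<longrightarrow> y ! j = m ! j"
    using assms(2) less_Suc_eq by auto
  then show "y ! i = m ! i \<or> L (y ! i) (m ! i)"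
    using assms(1) \<open>i < k\<close> unfolding colex_le_def by simp
qed

lemma colex_le_cong: "\<forall>i<k. y ! i = z ! i \<Longrightarrow> colex_le k z m \<Longrightarrow> colex_le k y m"
  unfolding colex_le_def by simp

lemma ex_L_greatest:
  assumes "finite X" "X \<noteq> {}" "X \<subseteq> A"
  shows "\<exists>M\<in>X. \<forall>x\<in>X. x = M \<or> L x M"
  using assms
proof (induction X rule: finite_ne_induct)
  case (insert x X)
  then obtain M where M: "M \<in> X" "\<forall>y\<in>X. y = M \<or> L y M" by auto
  show ?case
  proof (cases "L M x")
    case True
    have "L y x" if "y \<in> X" "y \<noteq> M" for y
      using L_trans[of y M x] M that True insert.prems by auto
    then have "\<forall>y\<in>insert x X. y = x \<or> L y x"
      using True by auto
    then show ?thesis by blast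
  next
    case False
    then have "x = M \<or> L x M" using L_total[of x M] M(1) insert.prems by auto
    then show ?thesis using M by blast
  qed
qed simp

lemma ex_colex_greatest:
  assumes "finite P" "P \<noteq> {}" "\<forall>y\<in>P. k \<le> length y \<and> set y \<subseteq> A"
  shows "\<exists>m\<in>P. \<forall>y\<in>P. colex_le k y m"
  using assms
proof (induction k arbitrary: P)
  case 0
  then show ?case by (auto simp: colex_le_def)
next
  case (Suc k)
  have "y ! k \<in> A" if "y \<in> P" for y
  proof -
    have "k < length y" "set y \<subseteq> A" using Suc.prems(3) that by auto
    then show ?thesis using nth_mem by blast
  qed
  then obtain M where M: "M \<in> (\<lambda>y. y ! k) ` P" "\<forall>x\<in>(\<lambda>y. y ! k) ` P. x = M \<or> L x M"
    using ex_L_greatest[of "(\<lambda>y. y ! k) ` P"] Suc.prems(1,2) by auto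
  define P' where "P' = {y\<in>P. y ! k = M}"
  have "finite P'" "P' \<noteq> {}" "\<forall>y\<in>P'. k \<le> length y \<and> set y \<subseteq> A"
    using Suc.prems M(1) by (auto simp: P'_def)
  then obtain m where m: "m \<in> P'" "\<forall>y\<in>P'. colex_le k y m"
    using Suc.IH[of P'] by blast
  have "colex_le (Suc k) y m" if "y \<in> P" for y
    unfolding colex_le_def
  proof (intro allI impI)
    fix i assume i: "i < Suc k" and agree: "\<forall>j. i < j \<and> j < Suc k \<longrightarrow> y ! j = m ! j"
    show "y ! i = m ! i \<or> L (y ! i) (m ! i)"
    proof (cases "i = k")
      case True
      then show ?thesis using M(2) m(1) that by (auto simp: P'_def)
    next
      case False
      then have "y \<in> P'" using agree i m(1) that by (auto simp: P'_def)
      then show ?thesis using m(2) agree i False unfolding colex_le_def by auto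
    qed
  qed
  then show ?case using m(1) by (auto simp: P'_def)
qed

end

section \<open>Orbits and duos\<close>

locale ordered_orbit = ordered_fraisse_limit F A U R L
  for F :: "('p, 'r) fstruct set"
    and A :: "'a set" and U :: "'p \<Rightarrow> 'a \<Rightarrow> bool" and R :: "'r \<Rightarrow> 'a \<Rightarrow> 'a \<Rightarrow> bool"
    and L :: "'a \<Rightarrow> 'a \<Rightarrow> bool" +
  fixes S :: "'a set" and a0 :: "'a list"
  assumes finite_S: "finite S" and S_A: "S \<subseteq> A" and S_ordered: "S_ordered A L S a0"
begin

abbreviation "G \<equiv> autS A U R L S"
abbreviation "Orb \<equiv> orbit G a0"
abbreviation "n \<equiv> length a0"

lemma a0_A: "set a0 \<subseteq> A"
  and a0_L: "i < n \<Longrightarrow> j < n \<Longrightarrow> i < j \<Longrightarrow> L (a0 ! i) (a0 ! j)"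
  and a0_notin_S: "i < n \<Longrightarrow> a0 ! i \<notin> S"
  using S_ordered by (simp_all add: S_ordered_def)

lemma orbit_iff: "y \<in> Orb \<longleftrightarrow> set y \<subseteq> A \<and> same_qf_type a0 y \<and> (\<forall>i<n. same_atoms_over S (a0 ! i) (y ! i))"
proof
  assume "y \<in> Orb"
  then obtain g where g: "g \<in> G" "y = map g a0" by (auto simp: orbit_def)
  have "set y \<subseteq> A" using g a0_A autS_in by auto
  moreover have "same_qf_type a0 y" using same_qf_type_map_autS[OF g(1) a0_A] g(2) by simp
  moreover have "same_atoms_over S (a0 ! i) (y ! i)" if "i < n" for i
  proof -
    have "a0 ! i \<in> A" using a0_A that nth_mem by blast
    then show ?thesis using same_atoms_over_autS[OF g(1) _ S_A] that g(2) by simp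
  qed
  ultimately show "set y \<subseteq> A \<and> same_qf_type a0 y \<and> (\<forall>i<n. same_atoms_over S (a0 ! i) (y ! i))"
    by blast
next
  assume "set y \<subseteq> A \<and> same_qf_type a0 y \<and> (\<forall>i<n. same_atoms_over S (a0 ! i) (y ! i))"
  then obtain g where "g \<in> G" "map g a0 = y"
    using same_qf_type_conjugate_over[OF finite_S S_A a0_A] by blast
  then show "y \<in> Orb" by (auto simp: orbit_def)
qed

lemma a0_orbit: "a0 \<in> Orb"
  unfolding orbit_def by (rule CollectI, rule exI[of _ id]) (simp add: id_autS)

lemma orbit_length: "y \<in> Orb \<Longrightarrow> length y = n"
  by (auto simp: orbit_def)

lemma orbit_nth_A: "y \<in> Orb \<Longrightarrow> i < n \<Longrightarrow> y ! i \<in> A"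
  using orbit_iff[of y] orbit_length[of y] nth_mem[of i y] by auto

lemma orbit_atoms: "y \<in> Orb \<Longrightarrow> i < n \<Longrightarrow> j < n \<Longrightarrow> same_atoms (a0 ! i) (a0 ! j) (y ! i) (y ! j)"
  and orbit_U: "y \<in> Orb \<Longrightarrow> i < n \<Longrightarrow> U p (y ! i) = U p (a0 ! i)"
  by (simp_all add: orbit_iff same_qf_type_def)

lemma orbit_same_atoms_over: "y \<in> Orb \<Longrightarrow> i < n \<Longrightarrow> same_atoms_over S (a0 ! i) (y ! i)"
  by (simp add: orbit_iff)

lemma orbit_L: "y \<in> Orb \<Longrightarrow> i < n \<Longrightarrow> j < n \<Longrightarrow> L (y ! i) (y ! j) \<longleftrightarrow> i < j"
proof -
  assume y: "y \<in> Orb" "i < n" "j < n"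
  have A: "a0 ! i \<in> A" "a0 ! j \<in> A"
    using a0_orbit orbit_nth_A y(2,3) by blast+
  consider "i < j" | "i = j" | "j < i" by linarith
  then have "L (a0 ! i) (a0 ! j) \<longleftrightarrow> i < j"
    by cases (use a0_L[OF y(2,3)] a0_L[OF y(3,2)] L_asym[OF _ A(2,1)] L_irrefl[OF A(1)] in auto)
  then show ?thesis
    using orbit_atoms[OF y] by (simp add: same_atoms_def)
qed

lemma orbit_nth_eq_iff:
  assumes "y \<in> Orb" "i < n" "j < n"
  shows "y ! i = y ! j \<longleftrightarrow> i = j"
proof
  assume "y ! i = y ! j"
  moreover have "\<not> L (y ! i) (y ! i)" using L_irrefl orbit_nth_A assms(1,2) by blast
  ultimately show "i = j" using orbit_L[OF assms] orbit_L[OF assms(1,3,2)] by auto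
qed simp

lemma orbit_notin_S: "y \<in> Orb \<Longrightarrow> i < n \<Longrightarrow> y ! i \<notin> S"
proof
  assume y: "y \<in> Orb" "i < n" "y ! i \<in> S"
  then have "\<not> L (a0 ! i) (y ! i)" "\<not> L (y ! i) (a0 ! i)"
    using orbit_same_atoms_over[OF y(1,2)] L_irrefl S_A by (auto simp: same_atoms_over_def same_atoms_def)
  moreover have "a0 ! i \<in> A" "y ! i \<in> A"
    using a0_orbit y(1,2) orbit_nth_A by blast+
  ultimately have "a0 ! i = y ! i"
    using L_total by blast
  then show False using a0_notin_S[OF y(2)] y(3) by simp
qed

lemma map_orbit:
  assumes "g \<in> G" "y \<in> Orb"
  shows "map g y \<in> Orb"
proof -
  obtain h where "h \<in> G" "y = map h a0" using assms(2) by (auto simp: orbit_def)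
  then show ?thesis
    unfolding orbit_def using autS_comp[OF assms(1)] by (intro CollectI exI[of _ "g \<circ> h"]) simp
qed

lemma duo_orbit: "duo R L Orb a b \<Longrightarrow> a \<in> Orb" "duo R L Orb a b \<Longrightarrow> b \<in> Orb"
  by (simp_all add: duo_def)

lemma duo_R:
  assumes d: "duo R L Orb a b" and ij: "i < n" "j < n"
  shows "R r (a ! i) (b ! j) = R r (a0 ! i) (a0 ! j)" "R r (b ! i) (a ! j) = R r (a0 ! i) (a0 ! j)"
proof -
  have "length a = n" using orbit_length duo_orbit(1)[OF d] by blast
  then have "R r (a ! i) (b ! j) = R r (a ! i) (a ! j)" "R r (a ! i) (a ! j) = R r (b ! i) (b ! j)"
    "R r (b ! i) (b ! j) = R r (b ! i) (a ! j)"
    using d ij by (simp_all add: duo_def)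
  moreover have "R r (a ! i) (a ! j) = R r (a0 ! i) (a0 ! j)"
    using orbit_atoms[OF duo_orbit(1)[OF d] ij] by (simp add: same_atoms_def)
  ultimately show "R r (a ! i) (b ! j) = R r (a0 ! i) (a0 ! j)" "R r (b ! i) (a ! j) = R r (a0 ! i) (a0 ! j)"
    by simp_all
qed

lemma duo_L:
  assumes d: "duo R L Orb a b" and ij: "i < n" "j < n"
  shows "L (a ! i) (b ! j) \<longleftrightarrow> i \<le> j" "L (b ! i) (a ! j) \<longleftrightarrow> i < j"
proof -
  have a: "a \<in> Orb" "length a = n" and b: "b \<in> Orb"
    using orbit_length duo_orbit[OF d] by blast+
  have A: "a ! k \<in> A" "b ! k \<in> A" if "k < n" for k
    using orbit_nth_A a b that by blast+
  have ab: "L (a ! k) (b ! k)" if "k < n" for k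
    using d a(2) that by (simp add: duo_def)
  have ba: "L (b ! k) (a ! l)" if "k < n" "l < n" "k < l" for k l
    using d a(2) that by (simp add: duo_def)
  have le: "L (a ! k) (b ! l) \<longleftrightarrow> k \<le> l" if kl: "k < n" "l < n" for k l
  proof -
    consider "k = l" | "k < l" | "l < k" by linarith
    then show ?thesis
    proof cases
      case 2
      then have "L (a ! k) (a ! l)" using orbit_L[OF a(1) kl] by simp
      then show ?thesis using L_trans[OF _ ab[OF kl(2)] A(1)[OF kl(1)] A(1)[OF kl(2)] A(2)[OF kl(2)]] 2
        by simp
    next
      case 3
      then show ?thesis using L_asym[OF ba[OF kl(2,1) 3] A(2)[OF kl(2)] A(1)[OF kl(1)]] by simp
    qed (use ab kl in simp)
  qed
  show "L (a ! i) (b ! j) \<longleftrightarrow> i \<le> j" using le[OF ij] .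
  show "L (b ! i) (a ! j) \<longleftrightarrow> i < j"
  proof (cases "i < j")
    case False
    then have "L (a ! j) (b ! i)" using le[OF ij(2,1)] by simp
    then show ?thesis using L_asym A ij False by blast
  qed (use ba ij in simp)
qed

lemma duo_distinct_nth: "duo R L Orb a b \<Longrightarrow> i < n \<Longrightarrow> a ! i \<noteq> b ! i"
  using duo_L(1)[of a b i i] L_irrefl orbit_nth_A duo_orbit(1) by fastforce

lemma duo_cross_atoms:
  assumes d: "duo R L Orb a b" and ij: "i < n" "j < n" "i \<noteq> j" and xy: "x \<in> {a, b}" "y \<in> {a, b}"
  shows "same_atoms (a0 ! i) (a0 ! j) (x ! i) (y ! j)"
proof -
  have orb: "a \<in> Orb" "b \<in> Orb" using duo_orbit[OF d] .
  have "R r (x ! i) (y ! j) = R r (a0 ! i) (a0 ! j)" for r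
    using xy duo_R[OF d ij(1,2)] orbit_atoms[OF orb(1) ij(1,2)] orbit_atoms[OF orb(2) ij(1,2)]
    by (auto simp: same_atoms_def)
  moreover have "L (x ! i) (y ! j) \<longleftrightarrow> L (a0 ! i) (a0 ! j)"
    using xy ij duo_L[OF d ij(1,2)] orbit_L[OF orb(1) ij(1,2)] orbit_L[OF orb(2) ij(1,2)]
      orbit_L[OF a0_orbit ij(1,2)] by auto
  ultimately show ?thesis by (simp add: same_atoms_def)
qed

lemma mixJ_orbit:
  assumes d: "duo R L Orb a b"
  shows "mixJ a b J \<in> Orb"
proof -
  let ?c = "mixJ a b J"
  have orb: "a \<in> Orb" "b \<in> Orb" using duo_orbit[OF d] .
  have len: "length ?c = n" using orbit_length[OF orb(1)] by simp
  have pick: "\<exists>x\<in>{a, b}. ?c ! i = x ! i" if "i < n" for i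
    using that len by (simp add: nth_mixJ)
  have A: "?c ! i \<in> A" if "i < n" for i
    using pick[OF that] orbit_nth_A[OF _ that] orb by auto
  have "set ?c \<subseteq> A"
    using A len by (auto simp: in_set_conv_nth)
  moreover have "same_atoms (a0 ! i) (a0 ! j) (?c ! i) (?c ! j)" if "i < n" "j < n" for i j
  proof (cases "i = j")
    case True
    then show ?thesis
      using A that a0_orbit orbit_nth_A R_irrefl L_irrefl by (simp add: same_atoms_def)
  next
    case False
    then show ?thesis
      using pick that duo_cross_atoms[OF d that False] by metis
  qed
  moreover have "U p (?c ! i) = U p (a0 ! i)" "same_atoms_over S (a0 ! i) (?c ! i)" if "i < n" for i p
    using pick[OF that] orbit_U[OF _ that] orbit_same_atoms_over[OF _ that] orb by auto
  ultimately show ?thesis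
    using len by (simp add: orbit_iff same_qf_type_def)
qed

lemma duo_conjugate:
  assumes ab: "duo R L Orb a b" and cd: "duo R L Orb c d"
  shows "\<exists>h\<in>G. map h a = c \<and> map h b = d"
proof -
  have orb: "a \<in> Orb" "b \<in> Orb" "c \<in> Orb" "d \<in> Orb"
    using duo_orbit ab cd by blast+
  have len: "length a = n" "length b = n" "length c = n" "length d = n"
    using orbit_length orb by blast+
  have qftp: "same_qf_type x y" if "x \<in> Orb" "y \<in> Orb" for x y
  proof -
    have "same_qf_type a0 x" "same_qf_type a0 y" using that by (simp_all add: orbit_iff)
    then show ?thesis by (rule same_qf_type_trans[OF same_qf_type_sym])
  qed
  have over: "same_atoms_over S (x ! i) (y ! i)" if "x \<in> Orb" "y \<in> Orb" "i < n" for x y i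
    using same_atoms_over_trans[OF same_atoms_over_sym] orbit_same_atoms_over that by blast
  have "same_atoms (a ! i) (b ! j) (c ! i) (d ! j) \<and> same_atoms (b ! j) (a ! i) (d ! j) (c ! i)"
    if "i < n" "j < n" for i j
    using duo_R[OF ab] duo_R[OF cd] duo_L[OF ab] duo_L[OF cd] that by (simp add: same_atoms_def)
  then have "same_qf_type (a @ b) (c @ d)"
    using same_qf_type_append[OF qftp[OF orb(1,3)] qftp[OF orb(2,4)]] len by simp
  moreover have "same_atoms_over S ((a @ b) ! i) ((c @ d) ! i)" if "i < length (a @ b)" for i
    using that over[OF orb(1,3)] over[OF orb(2,4), of "i - n"] len by (simp add: nth_append)
  moreover have "set (a @ b) \<subseteq> A" "set (c @ d) \<subseteq> A"
    using orb by (simp_all add: orbit_iff)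
  ultimately obtain h where "h \<in> G" "map h (a @ b) = c @ d"
    using same_qf_type_conjugate_over[OF finite_S S_A] by blast
  then show ?thesis using len by (auto simp: append_eq_append_conv)
qed

lemma cog_Lin:
  assumes "duo R L Orb a b"
  shows "(cog a b :: 'a list \<Rightarrow> 'k::field) \<in> Lin Orb"
proof -
  have "{y. (cog a b y :: 'k) \<noteq> 0} \<subseteq> mixJ a b ` Pow {..<length a}"
    using cog_eq_0 by blast
  moreover have "mixJ a b ` Pow {..<length a} \<subseteq> Orb"
    using mixJ_orbit[OF assms] by blast
  ultimately show ?thesis
    unfolding Lin_def by (auto intro: finite_subset)
qed

lemma Cog_subset_if_cogs_mem:
  assumes "subspace_of V W" "\<And>a b. duo R L Orb a b \<Longrightarrow> cog a b \<in> V"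
  shows "Cog R L Orb \<subseteq> (V :: ('a list \<Rightarrow> 'k::field) set)"
proof
  fix v :: "'a list \<Rightarrow> 'k" assume "v \<in> Cog R L Orb"
  then obtain C c where "finite C" "C \<subseteq> {cog a b | a b. duo R L Orb a b}" "v = (\<lambda>y. \<Sum>w\<in>C. c w * w y)"
    unfolding Cog_def by blast
  moreover have "C \<subseteq> V" using calculation(2) assms(2) by blast
  ultimately show "v \<in> V"
    using subspace_of_sum[OF assms(1)] by blast
qed

lemma Cog_subset_Lin: "Cog R L Orb \<subseteq> (Lin Orb :: ('a list \<Rightarrow> 'k::field) set)"
  using Cog_subset_if_cogs_mem[OF subspace_of_Lin cog_Lin] .

lemma invariant_Lin_orbit: "invariant G (Lin Orb :: ('a list \<Rightarrow> 'k::field) set)"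
  using invariant_Lin map_orbit by blast

lemma cog_left_eq_1: "duo R L Orb a b \<Longrightarrow> cog a b a = (1 :: 'k::field)"
  using cog_mixJ[of a b "{}"] duo_distinct_nth orbit_length duo_orbit(1) by fastforce

lemma Cog_subset_if_cog_mem:
  assumes V: "subspace_of V W" "invariant G V" and m: "duo R L Orb m m'" "cog m m' \<in> V"
  shows "Cog R L Orb \<subseteq> (V :: ('a list \<Rightarrow> 'k::field) set)"
proof (rule Cog_subset_if_cogs_mem[OF V(1)])
  fix a b assume ab: "duo R L Orb a b"
  obtain h where h: "h \<in> G" "map h m = a" "map h m' = b"
    using duo_conjugate[OF m(1) ab] by blast
  have "length m' = length m"
    using orbit_length duo_orbit m(1) by metis
  then have "act h (cog m m') = cog a b"
    using act_cog h(2,3) by blast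
  then show "cog a b \<in> V"
    using V(2) m(2) h(1) unfolding invariant_def by metis
qed

section \<open>Reducing an invariant vector to a cog\<close>

text \<open>The invariant of the reduction once the coordinates \<open>k, \<dots>, n-1\<close> are treated: \<open>m\<close> is the
  colexicographically greatest tuple in the support of the original vector and \<open>c\<close> its coefficient.\<close>

definition cog_stage :: "'a list \<Rightarrow> 'k::field \<Rightarrow> nat \<Rightarrow> ('a list \<Rightarrow> 'k) \<Rightarrow> 'a list \<Rightarrow> bool" where
  "cog_stage m c k w m' \<longleftrightarrow> length m' = n \<and>
     (\<forall>y. w y \<noteq> 0 \<longrightarrow> (\<forall>j\<in>{k..<n}. y ! j \<in> {m ! j, m' ! j}) \<and> colex_le k y m) \<and>
     (\<forall>J \<subseteq> {k..<n}. w (mixJ m m' J) = c * (-1) ^ card J) \<and>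
     (\<forall>j\<in>{k..<n}. twin (S \<union> set m \<union> (!) m' ` {j<..<n}) (m ! j) (m' ! j))"

lemma cog_stage_init:
  assumes "length m = n" "\<forall>y. v y \<noteq> 0 \<longrightarrow> colex_le n y m"
  shows "cog_stage m (v m) n v m"
  using assms by (simp add: cog_stage_def)

lemma cog_stage_position:
  assumes m: "m \<in> Orb" and w: "w \<in> Lin Orb" and st: "cog_stage m c (Suc k) w m'" and k: "k < n"
    and z: "w z \<noteq> 0" "i < n" "z ! i = m ! k"
  shows "i = k"
proof -
  have zO: "z \<in> Orb" using w z(1) by (auto simp: Lin_def)
  consider "k < i" | "i < k" | "i = k" by linarith
  then show ?thesis
  proof cases
    case 1
    then have "z ! i \<in> {m ! i, m' ! i}"
      using st z(1,2) by (simp add: cog_stage_def)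
    moreover have "m' ! i \<notin> set m"
      using st 1 z(2) by (simp add: cog_stage_def twin_def)
    moreover have "m ! i \<noteq> m ! k"
      using orbit_nth_eq_iff[OF m z(2) k] 1 by simp
    moreover have "m ! k \<in> set m" using k orbit_length[OF m] by simp
    ultimately show ?thesis
      using z(3) by auto
  next
    case 2
    have A: "z ! k \<in> A" "m ! k \<in> A" using orbit_nth_A zO m k by blast+
    have "L (m ! k) (z ! k)" using orbit_L[OF zO z(2) k] 2 z(3) by simp
    moreover have "z ! k = m ! k \<or> L (z ! k) (m ! k)"
      using st z(1) colex_le_SucD by (simp add: cog_stage_def)
    ultimately have False
      using L_irrefl[OF A(2)] L_asym[OF _ A(2,1)] by auto
    then show ?thesis ..
  qed
qed

context
  fixes m m' :: "'a list" and c :: "'k::field" and k :: nat and w w' :: "'a list \<Rightarrow> 'k" and x' :: 'a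
  assumes st: "cog_stage m c (Suc k) w m'" and k: "k < n" and lm: "length m = n"
    and w': "\<And>y. w' y = (if k < length y \<and> y ! k = m ! k then w y
               else if k < length y \<and> y ! k = x' then - w (y[k := m ! k]) else 0)"
begin

lemma nth_stage_update: "j < n \<Longrightarrow> m'[k := x'] ! j = (if j = k then x' else m' ! j)"
  using st by (simp add: cog_stage_def)

lemma cog_stage_update_support:
  assumes "w' y \<noteq> 0"
  shows "(\<forall>j\<in>{k..<n}. y ! j \<in> {m ! j, m'[k := x'] ! j}) \<and> colex_le k y m"
proof -
  have st_supp: "z ! j \<in> {m ! j, m' ! j}" if "w z \<noteq> 0" "k < j" "j < n" for z j
    using st that by (simp add: cog_stage_def)
  have st_colex: "colex_le (Suc k) z m" if "w z \<noteq> 0" for z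
    using st that by (simp add: cog_stage_def)
  show ?thesis
  proof (cases "k < length y \<and> y ! k = m ! k")
    case True
    then have wy: "w y \<noteq> 0" using assms w' by simp
    have "y ! j \<in> {m ! j, m'[k := x'] ! j}" if "j \<in> {k..<n}" for j
      using True st_supp[OF wy, of j] nth_stage_update[of j] that by (cases "j = k") auto
    moreover have "colex_le k y m" using colex_le_Suc_eq[OF st_colex[OF wy]] True by simp
    ultimately show ?thesis by blast
  next
    case False
    let ?z = "y[k := m ! k]"
    have yk: "k < length y" "y ! k = x'" and wz: "w ?z \<noteq> 0"
      using assms False w'[of y] by (auto split: if_splits)
    have "colex_le k ?z m" using colex_le_Suc_eq[OF st_colex[OF wz]] yk(1) by simp
    then have "colex_le k y m" by (rule colex_le_cong[rotated]) simp
    moreover have "y ! j \<in> {m ! j, m'[k := x'] ! j}" if "j \<in> {k..<n}" for j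
      using yk st_supp[OF wz, of j] nth_stage_update[of j] that by (cases "j = k") auto
    ultimately show ?thesis by blast
  qed
qed

lemma cog_stage_update_values:
  assumes x': "x' \<noteq> m ! k" and J: "J \<subseteq> {k..<n}"
  shows "w' (mixJ m (m'[k := x']) J) = c * (-1) ^ card J"
proof -
  have st_val: "w (mixJ m m' J) = c * (-1) ^ card J" if "J \<subseteq> {Suc k..<n}" for J
    using st that by (simp add: cog_stage_def)
  show ?thesis
  proof (cases "k \<in> J")
    case False
    then have "mixJ m (m'[k := x']) J = mixJ m m' J"
      using lm nth_stage_update by (intro nth_equalityI) (auto simp: nth_mixJ)
    moreover have "mixJ m m' J ! k = m ! k" using False k lm by (simp add: nth_mixJ)
    moreover have "J \<subseteq> {Suc k..<n}" using J False by (auto simp: subset_iff Suc_le_eq le_less)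
    ultimately show ?thesis using w' st_val k lm by simp
  next
    case True
    let ?y = "mixJ m (m'[k := x']) J"
    have "?y ! k = x'" using True k lm nth_stage_update by (simp add: nth_mixJ)
    moreover have "?y[k := m ! k] = mixJ m m' (J - {k})"
      using k lm nth_stage_update by (intro nth_equalityI) (auto simp: nth_mixJ nth_list_update)
    moreover have "J - {k} \<subseteq> {Suc k..<n}" using J by (auto simp: subset_iff Suc_le_eq le_less)
    moreover have "card J = Suc (card (J - {k}))"
      using card_Suc_Diff1[OF finite_subset[OF J finite_atLeastLessThan] True] by (rule sym)
    ultimately show ?thesis using w' st_val k lm x' by simp
  qed
qed

lemma cog_stage_update:
  assumes tw: "twin D (m ! k) x'" and D: "S \<union> set m \<union> (!) m' ` {Suc k..<n} \<subseteq> D"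
  shows "cog_stage m c k w' (m'[k := x'])"
proof -
  have "m ! k \<in> D" using D k lm by auto
  then have "x' \<noteq> m ! k" using tw by (auto simp: twin_def)
  moreover have "twin (S \<union> set m \<union> (!) (m'[k := x']) ` {j<..<n}) (m ! j) (m'[k := x'] ! j)"
    if j: "j \<in> {k..<n}" for j
  proof (cases "j = k")
    case True
    have "(!) (m'[k := x']) ` {k<..<n} \<subseteq> (!) m' ` {Suc k..<n}"
      using nth_stage_update by auto
    then show ?thesis using twin_mono[OF tw] D True k nth_stage_update by (auto simp: Suc_le_eq)
  next
    case False
    then have "(!) (m'[k := x']) ` {j<..<n} = (!) m' ` {j<..<n}" "m'[k := x'] ! j = m' ! j"
      using nth_stage_update j by auto
    then show ?thesis using st j False by (simp add: cog_stage_def)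
  qed
  ultimately show ?thesis
    using cog_stage_update_support cog_stage_update_values st by (simp add: cog_stage_def)
qed

end

lemma cog_stage_step:
  assumes m: "m \<in> Orb" and w: "w \<in> Lin Orb" and st: "cog_stage m c (Suc k) w m'" and k: "k < n"
  shows "\<exists>g\<in>G. \<exists>m''. cog_stage m c k (\<lambda>y. w y - act g w y) m''"
proof -
  have lm: "length m = n" using orbit_length[OF m] .
  have wO: "y \<in> Orb" if "w y \<noteq> 0" for y using w that by (auto simp: Lin_def)
  define D where "D = S \<union> (\<Union>y\<in>{y. w y \<noteq> 0}. set y) \<union> set m \<union> (!) m' ` {Suc k..<n}"
  have "finite D"
    using finite_S w by (simp add: D_def Lin_def)
  moreover have "D \<subseteq> A"
  proof -
    have "(!) m' ` {Suc k..<n} \<subseteq> A"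
      using st by (auto simp: cog_stage_def twin_def)
    moreover have "set y \<subseteq> A" if "w y \<noteq> 0" for y
      using wO[OF that] by (simp add: orbit_iff)
    moreover have "set m \<subseteq> A" using m by (simp add: orbit_iff)
    ultimately show ?thesis
      using S_A unfolding D_def by blast
  qed
  moreover have "m ! k \<in> D" using k lm by (simp add: D_def)
  moreover have "S \<subseteq> D" "m ! k \<notin> S" using orbit_notin_S[OF m k] by (auto simp: D_def)
  ultimately obtain x' g where tw: "twin D (m ! k) x'"
    and g: "g \<in> G" "g (m ! k) = x'" "\<forall>y\<in>D - {m ! k}. g y = y"
    using twin_exists twin_conjugate by metis
  have supp: "set z \<subseteq> D \<and> k < length z \<and> (\<forall>i<length z. z ! i = m ! k \<longrightarrow> i = k)" if "w z \<noteq> 0" for z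
    using that orbit_length[OF wO[OF that]] cog_stage_position[OF m w st k that] k by (auto simp: D_def)
  have act_eq: "w y - act g w y = (if k < length y \<and> y ! k = m ! k then w y
      else if k < length y \<and> y ! k = x' then - w (y[k := m ! k]) else 0)" for y
  proof (rule diff_act_point_move[where g = g and x = "m ! k" and D = D])
    show "g (m ! k) = x'" by (rule g(2))
    show "x' \<notin> D" using tw by (simp add: twin_def)
    show "g u = u" if "u \<in> D" "u \<noteq> m ! k" for u using g(3) that by blast
  qed (rule supp)
  have "S \<union> set m \<union> (!) m' ` {Suc k..<n} \<subseteq> D" by (auto simp: D_def)
  from cog_stage_update[OF st k lm act_eq tw this]
  have "cog_stage m c k (\<lambda>y. w y - act g w y) (m'[k := x'])" .
  then show ?thesis using g(1) by blast
qed

lemma twin_chain_atoms: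
  assumes m: "m \<in> Orb" and lm': "length m' = n"
    and tw: "\<forall>j<n. twin (S \<union> set m \<union> (!) m' ` {j<..<n}) (m ! j) (m' ! j)"
    and ij: "i < n" "j < n" "i \<noteq> j"
  shows "same_atoms (m ! i) (m' ! j) (m ! i) (m ! j)" (is ?mm')
    and "same_atoms (m' ! i) (m ! j) (m ! i) (m ! j)" (is ?m'm)
    and "same_atoms (m' ! i) (m' ! j) (m ! i) (m ! j)"
proof -
  have lm: "length m = n" using orbit_length[OF m] .
  have neq: "m ! i \<noteq> m ! j" using orbit_nth_eq_iff[OF m ij(1,2)] ij(3) by simp
  have new: "m' ! k \<notin> set m" if "k < n" for k using tw that by (simp add: twin_def)
  have chain: "same_atoms y (m' ! k) y (m ! k) \<and> same_atoms (m' ! k) y (m ! k) y"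
    if "k < n" "y \<in> S \<union> set m \<union> (!) m' ` {k<..<n}" "y \<noteq> m ! k" for k y
    using tw that by (simp add: twin_def)
  show ?mm' using chain[OF ij(2), of "m ! i"] neq ij(1) lm by simp
  show ?m'm using chain[OF ij(1), of "m ! j"] neq ij(2) lm by simp
  show "same_atoms (m' ! i) (m' ! j) (m ! i) (m ! j)"
  proof (cases "i < j")
    case True
    have "m' ! j \<noteq> m ! i" using new[OF ij(2)] ij(1) lm by auto
    then have "same_atoms (m' ! i) (m' ! j) (m ! i) (m' ! j)"
      using chain[OF ij(1), of "m' ! j"] True ij(2) by simp
    then show ?thesis using same_atoms_trans \<open>?mm'\<close> by blast
  next
    case False
    have "m' ! i \<noteq> m ! j" using new[OF ij(1)] ij(2) lm by auto
    then have "same_atoms (m' ! i) (m' ! j) (m' ! i) (m ! j)"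
      using chain[OF ij(2), of "m' ! i"] False ij by simp
    then show ?thesis using same_atoms_trans \<open>?m'm\<close> by blast
  qed
qed

lemma cog_stage_zero_duo:
  assumes m: "m \<in> Orb" and c: "c \<noteq> 0" and w: "w \<in> Lin Orb" and st: "cog_stage m c 0 w m'"
  shows "duo R L Orb m m'"
proof -
  have lm: "length m = n" using orbit_length[OF m] .
  have lm': "length m' = n" using st by (simp add: cog_stage_def)
  have tw: "\<forall>j<n. twin (S \<union> set m \<union> (!) m' ` {j<..<n}) (m ! j) (m' ! j)"
    using st by (simp add: cog_stage_def)
  have "w (mixJ m m' {..<n}) \<noteq> 0"
    using st c by (simp add: cog_stage_def lessThan_atLeast0)
  then have m'O: "m' \<in> Orb"
    using w mixJ_all[of m' m] lm lm' by (auto simp: Lin_def)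
  have A: "m ! i \<in> A" "m' ! i \<in> A" if "i < n" for i
    using orbit_nth_A m m'O that by blast+
  note atoms = twin_chain_atoms[OF m lm' tw]
  have "L (m' ! i) (m ! j)" if "i < n" "j < n" "i < j" for i j
    using atoms(2)[OF that(1,2)] orbit_L[OF m that(1,2)] that(3) by (simp add: same_atoms_def)
  moreover have "R r (m ! i) (m' ! j) = R r (m ! i) (m ! j) \<and> R r (m ! i) (m ! j) = R r (m' ! i) (m' ! j) \<and>
      R r (m' ! i) (m' ! j) = R r (m' ! i) (m ! j)" if "i < n" "j < n" for r i j
  proof (cases "i = j")
    case True
    then show ?thesis using tw that(1) A[OF that(1)] R_irrefl by (simp add: twin_def)
  next
    case False
    then show ?thesis using atoms[OF that False] by (simp add: same_atoms_def)
  qed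
  ultimately show ?thesis
    using m m'O tw lm by (simp add: duo_def twin_def)
qed

lemma cog_stage_zero_eq:
  fixes w :: "'a list \<Rightarrow> 'k::field"
  assumes m: "m \<in> Orb" and c: "c \<noteq> 0" and w: "w \<in> Lin Orb" and st: "cog_stage m c 0 w m'"
  shows "w = (\<lambda>y. c * cog m m' y)"
proof
  fix y
  have lm: "length m = n" using orbit_length[OF m] .
  have val: "w (mixJ m m' J) = c * (-1) ^ card J" if "J \<subseteq> {..<n}" for J
    using st that by (simp add: cog_stage_def lessThan_atLeast0)
  have cog: "cog m m' (mixJ m m' J) = (-1 :: 'k) ^ card J" if "J \<subseteq> {..<n}" for J
    using cog_mixJ[of m m' J] duo_distinct_nth[OF cog_stage_zero_duo[OF assms]] that lm by simp
  show "w y = c * cog m m' y"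
  proof (cases "w y = 0")
    case False
    define J where "J = {j. j < n \<and> y ! j \<noteq> m ! j}"
    have "y \<in> Orb" using w False by (auto simp: Lin_def)
    moreover have "\<forall>j\<in>{0..<n}. y ! j \<in> {m ! j, m' ! j}"
      using st False by (simp add: cog_stage_def)
    ultimately have "y = mixJ m m' J"
      using lm orbit_length by (intro nth_equalityI) (auto simp: J_def nth_mixJ)
    moreover have "J \<subseteq> {..<n}" by (auto simp: J_def)
    ultimately show ?thesis using val[OF \<open>J \<subseteq> {..<n}\<close>] cog[OF \<open>J \<subseteq> {..<n}\<close>] by simp
  next
    case True
    have "y \<notin> mixJ m m' ` Pow {..<length m}"
      using True val c lm by auto
    then have "cog m m' y = (0 :: 'k)" by (rule cog_eq_0)
    then show ?thesis using True by simp
  qed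
qed

lemma cog_stage_reach_zero:
  fixes V :: "('a list \<Rightarrow> 'k::field) set"
  assumes V: "subspace_of V (Lin Orb)" "invariant G V"
    and m: "m \<in> Orb" and v: "v \<in> V" "\<forall>y. v y \<noteq> 0 \<longrightarrow> colex_le n y m"
  shows "\<exists>w\<in>V. \<exists>m'. cog_stage m (v m) 0 w m'"
proof -
  have Lin: "w \<in> Lin Orb" if "w \<in> V" for w using V(1) that by (auto simp: subspace_of_def)
  have "\<exists>w\<in>V. \<exists>m'. cog_stage m (v m) (n - d) w m'" if "d \<le> n" for d
    using that
  proof (induction d)
    case 0
    show ?case using cog_stage_init[OF orbit_length[OF m] v(2)] v(1) by auto
  next
    case (Suc d)
    then obtain w m' where w: "w \<in> V" "cog_stage m (v m) (Suc (n - Suc d)) w m'"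
      by (auto simp: Suc_diff_Suc)
    moreover have "n - Suc d < n" using Suc.prems by simp
    ultimately obtain g m'' where "g \<in> G" "cog_stage m (v m) (n - Suc d) (\<lambda>y. w y - act g w y) m''"
      using cog_stage_step[OF m Lin[OF w(1)] w(2)] by blast
    then show ?case
      using subspace_of_diff_act[OF V w(1)] by blast
  qed
  from this[of n] show ?thesis by simp
qed

lemma ex_duo_cog_mem:
  fixes V :: "('a list \<Rightarrow> 'k::field) set"
  assumes V: "subspace_of V (Lin Orb)" "invariant G V" and v: "v \<in> V" "v \<noteq> (\<lambda>_. 0)"
  shows "\<exists>a b. duo R L Orb a b \<and> cog a b \<in> V"
proof -
  have Lin: "w \<in> Lin Orb" if "w \<in> V" for w using V(1) that by (auto simp: subspace_of_def)
  have supp: "finite {y. v y \<noteq> 0}" "{y. v y \<noteq> 0} \<subseteq> Orb"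
    using Lin[OF v(1)] by (simp_all add: Lin_def)
  moreover have "{y. v y \<noteq> 0} \<noteq> {}" using v(2) by auto
  moreover have "n \<le> length y \<and> set y \<subseteq> A" if "y \<in> {y. v y \<noteq> 0}" for y
    using supp(2) that orbit_length[of y] orbit_iff[of y] by auto
  ultimately obtain m where m: "v m \<noteq> 0" "\<forall>y. v y \<noteq> 0 \<longrightarrow> colex_le n y m"
    using ex_colex_greatest[of "{y. v y \<noteq> 0}" n] by blast
  have mO: "m \<in> Orb" using supp(2) m(1) by blast
  obtain w m' where w: "w \<in> V" "cog_stage m (v m) 0 w m'"
    using cog_stage_reach_zero[OF V mO v(1) m(2)] by blast
  have "duo R L Orb m m'"
    using cog_stage_zero_duo[OF mO m(1) Lin w(2)] w(1) .
  moreover have "cog m m' = (\<lambda>y. inverse (v m) * w y)"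
    using cog_stage_zero_eq[OF mO m(1) Lin[OF w(1)] w(2)] m(1) by (auto simp: field_simps)
  then have "cog m m' \<in> V"
    using V(1) w(1) by (simp add: subspace_of_def)
  ultimately show ?thesis by blast
qed

lemma Cog_subset_invariant:
  fixes V :: "('a list \<Rightarrow> 'k::field) set"
  assumes "subspace_of V (Lin Orb)" "V \<noteq> {\<lambda>_. 0}" "invariant G V"
  shows "Cog R L Orb \<subseteq> V"
proof -
  have "(\<lambda>_. 0) \<in> V" using assms(1) by (simp add: subspace_of_def)
  then obtain v where "v \<in> V" "v \<noteq> (\<lambda>_. 0)" using assms(2) by blast
  then obtain a b where "duo R L Orb a b" "cog a b \<in> V"
    using ex_duo_cog_mem assms(1,3) by blast
  then show ?thesis
    using Cog_subset_if_cog_mem assms(1,3) by blast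
qed

lemma Cog_ne_zero: "Cog R L Orb \<noteq> {\<lambda>_. 0 :: 'k::field}"
proof -
  define v :: "'a list \<Rightarrow> 'k" where "v y = (if y = a0 then 1 else 0)" for y
  have "{y. v y \<noteq> 0} = {a0}" by (auto simp: v_def)
  then have "v \<in> Lin Orb" "v \<noteq> (\<lambda>_. 0)"
    using a0_orbit by (auto simp: Lin_def)
  then obtain a b where ab: "duo R L Orb a b"
    using ex_duo_cog_mem[OF subspace_of_Lin invariant_Lin_orbit] by blast
  have "(cog a b :: 'a list \<Rightarrow> 'k) \<in> Cog R L Orb"
    unfolding Cog_def mem_Collect_eq
  proof (intro exI conjI)
    show "{cog a b} \<subseteq> {cog a b |a b. duo R L Orb a b}" using ab by blast
    show "(cog a b :: 'a list \<Rightarrow> 'k) = (\<lambda>y. \<Sum>w\<in>{cog a b}. (\<lambda>_. 1) w * w y)" by simp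
  qed simp
  moreover have "cog a b \<noteq> (\<lambda>_. 0 :: 'k)"
    using cog_left_eq_1[OF ab] by (metis one_neq_zero)
  ultimately show ?thesis by blast
qed

lemma Cog_simple:
  fixes W :: "('a list \<Rightarrow> 'k::field) set"
  assumes "subspace_of W (Cog R L Orb)" "invariant G W"
  shows "W = {\<lambda>_. 0} \<or> W = Cog R L Orb"
proof (cases "W = {\<lambda>_. 0}")
  case False
  have "subspace_of W (Lin Orb)"
    using assms(1) Cog_subset_Lin by (auto simp: subspace_of_def)
  then have "Cog R L Orb \<subseteq> W" using Cog_subset_invariant False assms(2) by blast
  then show ?thesis using assms(1) by (auto simp: subspace_of_def)
qed simp

end

theorem mainTheorem13:
  fixes F :: "('p::finite, 'r::finite) fstruct set"
    and A :: "'a set" and U :: "'p \<Rightarrow> 'a \<Rightarrow> bool" and R :: "'r \<Rightarrow> 'a \<Rightarrow> 'a \<Rightarrow> bool"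
    and L :: "'a \<Rightarrow> 'a \<Rightarrow> bool"
    and S :: "'a set" and a :: "'a list"
  assumes "\<forall>M\<in>F. irreducible_fstruct M"
    and "fraisse_limit_ordered_forb F A U R L"
    and "finite S" and "S \<subseteq> A"
    and "S_ordered A L S a"
  shows "(\<forall>V :: ('a list \<Rightarrow> 'k::field) set.
            subspace_of V (Lin (orbit (autS A U R L S) a)) \<and> V \<noteq> {\<lambda>_. 0} \<and>
            invariant (autS A U R L S) V
            \<longrightarrow> Cog R L (orbit (autS A U R L S) a) \<subseteq> V)
       \<and> Cog R L (orbit (autS A U R L S) a) \<noteq> {\<lambda>_. (0::'k)}
       \<and> (\<forall>W :: ('a list \<Rightarrow> 'k) set.
            subspace_of W (Cog R L (orbit (autS A U R L S) a)) \<and>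
            invariant (autS A U R L S) W
            \<longrightarrow> W = {\<lambda>_. 0} \<or> W = Cog R L (orbit (autS A U R L S) a))"
proof -
  interpret ordered_orbit F A U R L S a
    using assms by unfold_locales
  show ?thesis
  proof (intro conjI allI impI)
    fix V :: "('a list \<Rightarrow> 'k) set"
    assume "subspace_of V (Lin Orb) \<and> V \<noteq> {\<lambda>_. 0} \<and> invariant G V"
    then show "Cog R L Orb \<subseteq> V" using Cog_subset_invariant by blast
  next
    show "Cog R L Orb \<noteq> {\<lambda>_. 0 :: 'k}" by (rule Cog_ne_zero)
  next
    fix W :: "('a list \<Rightarrow> 'k) set"
    assume "subspace_of W (Cog R L Orb) \<and> invariant G W"
    then show "W = {\<lambda>_. 0} \<or> W = Cog R L Orb" using Cog_simple by blast
  qed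
qed

end
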